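(* Let $\alpha,\beta$ be positive integers and $q_0=(x_0,y_0,z_0)\in\mathbb{G}^3_{(\alpha,\beta)}$ a Riemannian point ($x_0\neq0$, $y_0\neq0$). Then $\tau_1(\lambda_0)\le\tau_2(\lambda_0)$ holds for all $\lambda_0=(u_0,v_0,w_0)\in H^{-1}_{q_0}(1/2)$ with $u_0=0$ (equivalently $\phi_1=\pi_\alpha/2$) if and only if $$|y_0|\ge\frac{\pi_\alpha|x_0|^{\alpha+1}}{\pi_\beta(\alpha+1)}.$$ Moreover, if $\{\lambda_0\in H^{-1}_{q_0}(1/2):u_0=0,\ \tau_2(\lambda_0)\le\tau_1(\lambda_0)\}\neq\emptyset$, then the curve $H^{-1}_{q_0}(1/2)\cap\{u_0=0\}$ consists of four arcs: two, centered around $\phi_2=0$ and $\phi_2=\pi_\beta$, on which $\tau_1\le\tau_2$, and two others on which $\tau_2\le\tau_1$.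
   Context: $\mathbb{G}^3_{(\alpha,\beta)}$ is $\mathbb{R}^3$ with coordinates $(x,y,z)$ and the sub-Riemannian structure generated by $\partial_x$, $x^\alpha\partial_y$, $x^\alpha y^\beta\partial_z$. Covectors $\lambda=(u,v,w)$, $H(q,\lambda)=\tfrac12(u^2+x^{2\alpha}v^2+x^{2\alpha}y^{2\beta}w^2)$, $H^{-1}_{q_0}(1/2)=\{\lambda_0:H(q_0,\lambda_0)=1/2\}$. $x(t)$ is the first coordinate of the projection of the solution of Hamilton's equations with initial data $(q_0,\lambda_0)$. For real $a\ge1$: $\pi_a=2\int_0^1(1-t^{2a})^{-1/2}dt$; $\sin_a$ is the inverse of $s\mapsto\int_0^s(1-t^{2a})^{-1/2}dt$ on $[0,\pi_a/2]$, extended by $\sin_a(s)=\sin_a(\pi_a-s)$ to $[0,\pi_a]$, oddly and $2\pi_a$-periodically; $\cos_a=\sin_a'$; $\rho_\theta(s)=|s|^{\theta-1}s$. Spherical coordinates $(\phi_1,\phi_2)\in[0,\pi_\alpha]\times[0,2\pi_\beta)$: $u_0=\cos_\alpha(\phi_1)$, $v_0=\cos_\beta(\phi_2)\rho_\alpha(\sin_\alpha(\phi_1)/x_0)$, $w_0=\rho_\alpha(\sin_\alpha(\phi_1)/x_0)\rho_\beta(\sin_\beta(\phi_2)/y_0)$. $\omega_1=(v_0^2+y_0^{2\beta}w_0^2)^{1/(2\alpha)}$, $\omega_2=|w_0|^{1/\beta}(v_0^2+y_0^{2\beta}w_0^2)^{(\beta-1)/(2\beta)}$, $\tau_1=\pi_\alpha/\omega_1$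 ($+\infty$ if $\omega_1=0$), $\tau_2=\min\{t>0:\omega_2\int_0^tx(s)^{2\alpha}ds=\pi_\beta\}$ ($+\infty$ if $w_0=0$). *)

theory Defs
  imports "HOL-Analysis.Analysis" "HOL-Library.Extended_Real"
begin

definition Fgen :: "real \<Rightarrow> real \<Rightarrow> real" where
  "Fgen a s = integral {0..s} (\<lambda>t. (1 - t powr (2 * a)) powr (-1/2))"

definition pi_gen :: "real \<Rightarrow> real" where
  "pi_gen a = 2 * Fgen a 1"

definition sin_base :: "real \<Rightarrow> real \<Rightarrow> real" where
  "sin_base a s = (THE y. y \<in> {0..1} \<and> Fgen a y = s)"

definition sin_half :: "real \<Rightarrow> real \<Rightarrow> real" where
  "sin_half a r = (if r \<le> pi_gen a / 2 then sin_base a r else sin_base a (pi_gen a - r))"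

text \<open>Odd and 2 pi_a-periodic extension.\<close>
definition sin_gen :: "real \<Rightarrow> real \<Rightarrow> real" where
  "sin_gen a s =
     (let r = s - 2 * pi_gen a * of_int \<lfloor>s / (2 * pi_gen a)\<rfloor>
      in if r \<le> pi_gen a then sin_half a r else - sin_half a (2 * pi_gen a - r))"

definition cos_gen :: "real \<Rightarrow> real \<Rightarrow> real" where
  "cos_gen a s = deriv (sin_gen a) s"

definition rho :: "real \<Rightarrow> real \<Rightarrow> real" where
  "rho \<theta> s = \<bar>s\<bar> powr (\<theta> - 1) * s"

definition Ham :: "nat \<Rightarrow> nat \<Rightarrow> real \<times> real \<times> real \<Rightarrow> real \<times> real \<times> real \<Rightarrow> real" where
  "Ham \<alpha> \<beta> q l = (case q of (x, y, z) \<Rightarrow> case l of (u, v, w) \<Rightarrow>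
     (u\<^sup>2 + x ^ (2 * \<alpha>) * v\<^sup>2 + x ^ (2 * \<alpha>) * y ^ (2 * \<beta>) * w\<^sup>2) / 2)"

definition ham_sol :: "nat \<Rightarrow> nat \<Rightarrow> real \<times> real \<times> real \<Rightarrow> real \<times> real \<times> real \<Rightarrow>
    (real \<Rightarrow> real) \<Rightarrow> (real \<Rightarrow> real) \<Rightarrow> (real \<Rightarrow> real) \<Rightarrow>
    (real \<Rightarrow> real) \<Rightarrow> (real \<Rightarrow> real) \<Rightarrow> (real \<Rightarrow> real) \<Rightarrow> bool" where
  "ham_sol \<alpha> \<beta> q0 l0 X Y Z U V W \<longleftrightarrow>
     (X 0, Y 0, Z 0) = q0 \<and> (U 0, V 0, W 0) = l0 \<and>
     (\<forall>t\<ge>0.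
        (X has_real_derivative U t) (at t within {0..}) \<and>
        (Y has_real_derivative X t ^ (2 * \<alpha>) * V t) (at t within {0..}) \<and>
        (Z has_real_derivative X t ^ (2 * \<alpha>) * Y t ^ (2 * \<beta>) * W t) (at t within {0..}) \<and>
        (U has_real_derivative
           - (real \<alpha> * X t ^ (2 * \<alpha> - 1) * ((V t)\<^sup>2 + Y t ^ (2 * \<beta>) * (W t)\<^sup>2)))
           (at t within {0..}) \<and>
        (V has_real_derivative
           - (real \<beta> * X t ^ (2 * \<alpha>) * Y t ^ (2 * \<beta> - 1) * (W t)\<^sup>2)) (at t within {0..}) \<and>
        (W has_real_derivative 0) (at t within {0..}))"

definition traj_x :: "nat \<Rightarrow> nat \<Rightarrow> real \<times> real \<times> real \<Rightarrow> real \<times> real \<times> real \<Rightarrow> real \<Rightarrow> real" where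
  "traj_x \<alpha> \<beta> q0 l0 t = (THE r. \<exists>X Y Z U V W. ham_sol \<alpha> \<beta> q0 l0 X Y Z U V W \<and> X t = r)"

definition omega1 :: "nat \<Rightarrow> nat \<Rightarrow> real \<times> real \<times> real \<Rightarrow> real \<times> real \<times> real \<Rightarrow> real" where
  "omega1 \<alpha> \<beta> q0 l0 = (case q0 of (x0, y0, z0) \<Rightarrow> case l0 of (u0, v0, w0) \<Rightarrow>
     (v0\<^sup>2 + y0 ^ (2 * \<beta>) * w0\<^sup>2) powr (1 / (2 * real \<alpha>)))"

definition omega2 :: "nat \<Rightarrow> nat \<Rightarrow> real \<times> real \<times> real \<Rightarrow> real \<times> real \<times> real \<Rightarrow> real" where
  "omega2 \<alpha> \<beta> q0 l0 = (case q0 of (x0, y0, z0) \<Rightarrow> case l0 of (u0, v0, w0) \<Rightarrow>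
     \<bar>w0\<bar> powr (1 / real \<beta>) *
     (v0\<^sup>2 + y0 ^ (2 * \<beta>) * w0\<^sup>2) powr ((real \<beta> - 1) / (2 * real \<beta>)))"

definition tau1 :: "nat \<Rightarrow> nat \<Rightarrow> real \<times> real \<times> real \<Rightarrow> real \<times> real \<times> real \<Rightarrow> ereal" where
  "tau1 \<alpha> \<beta> q0 l0 =
     (if omega1 \<alpha> \<beta> q0 l0 = 0 then \<infinity> else ereal (pi_gen (real \<alpha>) / omega1 \<alpha> \<beta> q0 l0))"

text \<open>The minimum is written as an infimum in ereal (which equals the min when attained,
  and is +\<infinity> when the set is empty).\<close>
definition tau2 :: "nat \<Rightarrow> nat \<Rightarrow> real \<times> real \<times> real \<Rightarrow> real \<times> real \<times> real \<Rightarrow> ereal" where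
  "tau2 \<alpha> \<beta> q0 l0 =
     (if snd (snd l0) = 0 then \<infinity>
      else Inf {ereal t | t. t > 0 \<and>
             omega2 \<alpha> \<beta> q0 l0 * integral {0..t} (\<lambda>s. traj_x \<alpha> \<beta> q0 l0 s ^ (2 * \<alpha>))
               = pi_gen (real \<beta>)})"

definition sph :: "nat \<Rightarrow> nat \<Rightarrow> real \<times> real \<times> real \<Rightarrow> real \<Rightarrow> real \<Rightarrow> real \<times> real \<times> real" where
  "sph \<alpha> \<beta> q0 \<phi>1 \<phi>2 = (case q0 of (x0, y0, z0) \<Rightarrow>
     (cos_gen (real \<alpha>) \<phi>1,
      cos_gen (real \<beta>) \<phi>2 * rho (real \<alpha>) (sin_gen (real \<alpha>) \<phi>1 / x0),
      rho (real \<alpha>) (sin_gen (real \<alpha>) \<phi>1 / x0) * rho (real \<beta>) (sin_gen (real \<beta>) \<phi>2 / y0)))"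

end

theory Submission
  imports Defs
begin

(* With u0 = 0 the x-equation decouples: the (y, v) energy c = v0^2 + y0^(2 beta) w0^2 equals
   x0^(-2 alpha), so x'' = - alpha c x^(2 alpha - 1), and x(t) = x0 sin_alpha (t / |x0| + pi_alpha / 2)
   is the solution, unique by a Gronwall estimate.  Hence omega1 = 1 / |x0|, tau1 = pi_alpha |x0|, and
   the integral of x^(2 alpha) has an explicit strictly increasing primitive, so tau2 <= tau1 iff
   omega2 times this primitive at tau1 reaches pi_beta.  That product is rho^(1/beta) K with
   K = pi_alpha |x0|^(alpha + 1) / ((alpha + 1) |y0|) and rho = |w0| |y0|^beta |x0|^alpha <= 1, where
   rho = 1 when v0 = 0 and rho^(1/beta) = |sin_beta phi2| in spherical coordinates.  So tau1 <= tau2 on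
   the whole circle iff K <= pi_beta, and otherwise the two regimes are separated by the four points
   where |sin_beta phi2| = pi_beta / K. *)

lemma powr_minus_half: "0 < (x::real) \<Longrightarrow> x powr (-1/2) = 1 / sqrt x"
  by (simp add: powr_minus_divide powr_half_sqrt flip: minus_divide_left)

lemma powr_of_nat_nonneg: "0 \<le> (t::real) \<Longrightarrow> 0 < k \<Longrightarrow> t powr (real k) = t ^ k"
  by (cases "t = 0") (auto simp: powr_realpow)

lemma has_integral_inverse_sqrt_one_minus: "((\<lambda>t::real. (1 - t) powr (-1/2)) has_integral 2) {0..1}"
proof -
  have "((\<lambda>t::real. (1 - t) powr (-1/2)) has_integral
          (\<lambda>t. - 2 * sqrt (1 - t)) 1 - (\<lambda>t. - 2 * sqrt (1 - t)) 0) {0..1}"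
  proof (rule fundamental_theorem_of_calculus_interior)
    fix x :: real assume x: "x \<in> {0<..<1}"
    then have "((\<lambda>t. - 2 * sqrt (1 - t)) has_real_derivative 1 / sqrt (1 - x)) (at x)"
      by (auto intro!: derivative_eq_intros simp: field_simps)
    moreover have "(1 - x) powr (-1/2) = 1 / sqrt (1 - x)" using x by (intro powr_minus_half) auto
    ultimately show "((\<lambda>t. - 2 * sqrt (1 - t)) has_vector_derivative (1 - x) powr (-1/2)) (at x)"
      by (simp add: has_real_derivative_iff_has_vector_derivative)
  qed (auto intro!: continuous_intros)
  then show ?thesis by simp
qed

lemma DERIV_from_derivative_limit:
  fixes f f' :: "real \<Rightarrow> real"
  assumes e: "0 < e" and cont: "continuous_on {x - e..x + e} f"
    and der: "\<And>t. x - e < t \<Longrightarrow> t < x + e \<Longrightarrow> t \<noteq> x \<Longrightarrow> (f has_real_derivative f' t) (at t)"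
    and lim: "(f' \<longlongrightarrow> L) (at x)"
  shows "(f has_real_derivative L) (at x)"
  unfolding has_field_derivative_iff LIM_eq
proof (intro allI impI)
  fix r :: real assume "0 < r"
  then obtain s where s: "0 < s" "\<And>y. y \<noteq> x \<Longrightarrow> norm (y - x) < s \<Longrightarrow> norm (f' y - L) < r"
    using lim unfolding LIM_eq by blast
  show "\<exists>s>0. \<forall>y. y \<noteq> x \<and> norm (y - x) < s \<longrightarrow> norm ((f y - f x) / (y - x) - L) < r"
  proof (intro exI[of _ "min s e"] conjI allI impI)
    fix y assume y: "y \<noteq> x \<and> norm (y - x) < min s e"
    define a b where "a = min x y" and "b = max x y"
    have ab: "a < b" "x - e < a" "b < x + e" using y by (auto simp: a_def b_def)
    have der_ab: "(f has_real_derivative f' z) (at z)" if "a < z" "z < b" for z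
      using der[of z] ab that by (auto simp: a_def b_def)
    have "continuous_on {a..b} f" using cont by (rule continuous_on_subset) (use ab in auto)
    moreover have "f differentiable (at z)" if "a < z" "z < b" for z
      using der_ab[OF that] real_differentiable_def by blast
    ultimately obtain l z where
      z: "a < z" "z < b" "(f has_real_derivative l) (at z)" "f b - f a = (b - a) * l"
      using MVT[OF ab(1)] by blast
    have "(f y - f x) / (y - x) = (f b - f a) / (b - a)"
      using y by (cases "x < y") (auto simp: a_def b_def field_simps)
    also have "\<dots> = f' z"
      using z DERIV_unique[OF z(3) der_ab[OF z(1,2)]] ab by simp
    finally have "(f y - f x) / (y - x) = f' z" .
    moreover have "z \<noteq> x" "norm (z - x) < s" using z y by (auto simp: a_def b_def)
    ultimately show "norm ((f y - f x) / (y - x) - L) < r" using s by simp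
  qed (use s e in simp)
qed

lemma DERIV_affine_symmetry:
  fixes f :: "real \<Rightarrow> real"
  assumes sym: "\<And>t. f (a * t + b) = c * f t" and c: "c \<noteq> 0"
    and D: "(f has_real_derivative D) (at (a * s + b))"
  shows "(f has_real_derivative a * D / c) (at s)"
proof -
  have "f = (\<lambda>t. f (a * t + b) / c)" using sym c by auto
  moreover have "((\<lambda>t. f (a * t + b) / c) has_real_derivative D * a / c) (at s)"
    using D c by (auto intro!: derivative_eq_intros DERIV_chain2[where f=f])
  ultimately show ?thesis by (simp add: mult.commute)
qed

lemma abs_power_diff_le:
  fixes a b M :: real
  assumes "\<bar>a\<bar> \<le> M" "\<bar>b\<bar> \<le> M"
  shows "\<bar>a ^ k - b ^ k\<bar> \<le> real k * M ^ (k - 1) * \<bar>a - b\<bar>"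
proof -
  have "\<bar>a ^ k - b ^ k\<bar> = \<bar>a - b\<bar> * \<bar>\<Sum>i<k. b ^ (k - Suc i) * a ^ i\<bar>"
    by (simp add: power_diff_sumr2 abs_mult)
  also have "\<dots> \<le> \<bar>a - b\<bar> * (\<Sum>i<k. M ^ (k - 1))"
  proof (intro mult_left_mono order.trans[OF sum_abs sum_mono])
    fix i assume i: "i \<in> {..<k}"
    have "\<bar>b ^ (k - Suc i) * a ^ i\<bar> \<le> M ^ (k - Suc i) * M ^ i"
      using assms by (auto simp: abs_mult power_abs intro!: mult_mono power_mono)
    also have "\<dots> = M ^ (k - 1)" using i by (simp flip: power_add)
    finally show "\<bar>b ^ (k - Suc i) * a ^ i\<bar> \<le> M ^ (k - 1)" .
  qed simp
  finally show ?thesis by (simp add: mult_ac)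
qed

lemma difference_energy_bound:
  fixes p q u a M :: real
  assumes "\<bar>p\<bar> \<le> M" "\<bar>q\<bar> \<le> M" "0 \<le> a"
  shows "2 * (p - q) * u - 2 * a * u * (p ^ k - q ^ k)
           \<le> (1 + a * real k * M ^ (k - 1)) * ((p - q)\<^sup>2 + u\<^sup>2)"
proof -
  let ?L = "a * real k * M ^ (k - 1)"
  have M: "0 \<le> M" using assms by linarith
  have "(p - q) * u \<le> \<bar>p - q\<bar> * \<bar>u\<bar>" by (simp flip: abs_mult)
  moreover have "- (a * u * (p ^ k - q ^ k)) \<le> a * \<bar>u\<bar> * \<bar>p ^ k - q ^ k\<bar>"
    using abs_ge_minus_self[of "a * u * (p ^ k - q ^ k)"] assms(3) by (simp add: abs_mult)
  ultimately have "2 * (p - q) * u - 2 * a * u * (p ^ k - q ^ k)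
          \<le> 2 * \<bar>p - q\<bar> * \<bar>u\<bar> + 2 * a * \<bar>u\<bar> * \<bar>p ^ k - q ^ k\<bar>"
    by linarith
  also have "\<dots> \<le> 2 * \<bar>p - q\<bar> * \<bar>u\<bar> + 2 * a * \<bar>u\<bar> * (real k * M ^ (k - 1) * \<bar>p - q\<bar>)"
    using abs_power_diff_le[OF assms(1,2)] assms(3) by (intro add_left_mono mult_left_mono) auto
  also have "\<dots> = (1 + ?L) * (2 * \<bar>p - q\<bar> * \<bar>u\<bar>)" by (simp add: algebra_simps)
  also have "\<dots> \<le> (1 + ?L) * ((p - q)\<^sup>2 + u\<^sup>2)"
  proof (rule mult_left_mono)
    have "0 \<le> (\<bar>p - q\<bar> - \<bar>u\<bar>)\<^sup>2" by simp
    then show "2 * \<bar>p - q\<bar> * \<bar>u\<bar> \<le> (p - q)\<^sup>2 + u\<^sup>2" by (simp add: power2_eq_square algebra_simps)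
  qed (use assms(3) M in simp)
  finally show ?thesis .
qed

lemma power_ode_unique:
  fixes xa ua xb ub :: "real \<Rightarrow> real" and a M :: real and k :: nat
  assumes dxa: "\<And>t. 0 \<le> t \<Longrightarrow> (xa has_real_derivative ua t) (at t within {0..})"
    and dua: "\<And>t. 0 \<le> t \<Longrightarrow> (ua has_real_derivative - (a * xa t ^ k)) (at t within {0..})"
    and dxb: "\<And>t. 0 \<le> t \<Longrightarrow> (xb has_real_derivative ub t) (at t within {0..})"
    and dub: "\<And>t. 0 \<le> t \<Longrightarrow> (ub has_real_derivative - (a * xb t ^ k)) (at t within {0..})"
    and init: "xa 0 = xb 0" "ua 0 = ub 0"
    and bounded: "\<And>t. 0 \<le> t \<Longrightarrow> \<bar>xa t\<bar> \<le> M" "\<And>t. 0 \<le> t \<Longrightarrow> \<bar>xb t\<bar> \<le> M"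
    and "0 \<le> a" "0 \<le> T"
  shows "xa T = xb T"
proof -
  define L where "L = 1 + a * real k * M ^ (k - 1)"
  define d where "d t = (xa t - xb t)\<^sup>2 + (ua t - ub t)\<^sup>2" for t
  define d' where "d' t = 2 * (xa t - xb t) * (ua t - ub t) - 2 * a * (ua t - ub t) * (xa t ^ k - xb t ^ k)"
    for t
  (* Gronwall: d' <= L d makes exp (- L t) d non-increasing, and it vanishes at 0. *)
  define e where "e t = exp (- L * t) * d t" for t
  have de: "(e has_real_derivative exp (- L * t) * (d' t - L * d t)) (at t within {0..})"
    if "0 \<le> t" for t
  proof -
    have "(d has_real_derivative d' t) (at t within {0..})"
      unfolding d_def[abs_def] d'_def
      using dxa[OF that] dua[OF that] dxb[OF that] dub[OF that]
      by (auto intro!: derivative_eq_intros simp: algebra_simps)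
    then show ?thesis unfolding e_def[abs_def]
      by (auto intro!: derivative_eq_intros simp: algebra_simps)
  qed
  have "e T \<le> e 0"
  proof (rule DERIV_nonpos_imp_decreasing_open[OF \<open>0 \<le> T\<close>])
    fix t assume t: "0 < t" "t < T"
    have "(e has_real_derivative exp (- L * t) * (d' t - L * d t)) (at t within {0<..})"
      using de[of t] t by (auto elim: DERIV_subset)
    moreover have "at t within {0<..} = at t" using t by (intro at_within_open) auto
    ultimately have "(e has_real_derivative exp (- L * t) * (d' t - L * d t)) (at t)" by simp
    moreover have "d' t \<le> L * d t"
      unfolding d'_def d_def L_def using t bounded \<open>0 \<le> a\<close> by (intro difference_energy_bound) auto
    ultimately show "\<exists>y. (e has_real_derivative y) (at t) \<and> y \<le> 0"
      by (intro exI conjI) (auto intro: mult_nonneg_nonpos)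
  next
    have "continuous_on {0..} e"
      unfolding continuous_on_eq_continuous_within using de DERIV_continuous by (metis atLeast_iff)
    then show "continuous_on {0..T} e" by (rule continuous_on_subset) auto
  qed
  moreover have "e 0 = 0" using init by (simp add: e_def d_def)
  ultimately have "d T \<le> 0" by (simp add: e_def mult_le_0_iff)
  then have "(xa T - xb T)\<^sup>2 \<le> 0" unfolding d_def by (smt (verit) zero_le_power2)
  then show ?thesis by simp
qed

lemma Inf_level_set_compare:
  fixes g :: "real \<Rightarrow> real"
  assumes mono: "strict_mono g" and cont: "continuous_on {0..T} g" and "g 0 < p" "0 \<le> T"
  shows "(ereal T \<le> Inf {ereal t | t. 0 < t \<and> g t = p} \<longleftrightarrow> g T \<le> p)
       \<and> (Inf {ereal t | t. 0 < t \<and> g t = p} \<le> ereal T \<longleftrightarrow> p \<le> g T)"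
proof -
  let ?\<Sigma> = "{ereal t | t. 0 < t \<and> g t = p}"
  have hit: "\<exists>t. 0 < t \<and> g t = p" if le: "p \<le> g T"
  proof -
    obtain t where t: "0 \<le> t" "g t = p"
      using IVT'[of g 0 p T] cont le assms(3,4) by auto
    moreover have "t \<noteq> 0" using t assms(3) by auto
    ultimately show ?thesis by (intro exI[of _ t]) simp
  qed
  consider "?\<Sigma> = {}" | t where "0 < t" "g t = p" "?\<Sigma> = {ereal t}"
  proof (cases "?\<Sigma> = {}")
    case False
    then obtain t where t: "0 < t" "g t = p" by auto
    then have "s = t" if "g s = p" for s using that strict_mono_eq[OF mono] by metis
    then have "?\<Sigma> = {ereal t}" using t by blast
    then show ?thesis by (rule that(2)[OF t])
  qed (rule that(1))
  then show ?thesis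
  proof cases
    case 1
    have "g T < p"
    proof (rule ccontr)
      assume "\<not> g T < p"
      then obtain t where "0 < t" "g t = p" using hit by auto
      then have "ereal t \<in> ?\<Sigma>" by auto
      then show False using 1 by simp
    qed
    then show ?thesis unfolding 1 by (simp add: top_ereal_def)
  next
    case (2 t)
    then show ?thesis unfolding 2(3)
      using strict_mono_less_eq[OF mono, of T t] strict_mono_less_eq[OF mono, of t T]
      by (simp add: 2(2)[symmetric])
  qed
qed

section \<open>Generalised trigonometric functions\<close>

definition gen_integrand :: "nat \<Rightarrow> real \<Rightarrow> real" where
  "gen_integrand n t = (1 - t powr (2 * real n)) powr (-1/2)"

lemma gen_integrand_eq:
  assumes "1 \<le> n" "0 \<le> t" "t < 1"
  shows "gen_integrand n t = 1 / sqrt (1 - t ^ (2 * n))"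
proof -
  have "t ^ (2 * n) < 1" using assms by (simp add: power_less_one_iff)
  then have "(1 - t ^ (2 * n)) powr (-1/2) = 1 / sqrt (1 - t ^ (2 * n))" by (intro powr_minus_half) simp
  then show ?thesis
    using assms powr_of_nat_nonneg[of t "2 * n"] by (simp add: gen_integrand_def)
qed

lemma gen_integrand_pos: "1 \<le> n \<Longrightarrow> 0 \<le> t \<Longrightarrow> t < 1 \<Longrightarrow> 0 < gen_integrand n t"
  by (simp add: gen_integrand_eq power_less_one_iff)

lemma gen_integrand_bound:
  assumes "1 \<le> n" "0 \<le> t" "t \<le> 1"
  shows "\<bar>gen_integrand n t\<bar> \<le> (1 - t) powr (-1/2)"
proof (cases "t = 1")
  case False
  then have "0 < 1 - t" using assms by simp
  moreover have "1 - t \<le> 1 - t ^ (2 * n)"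
    using assms power_decreasing[of 1 "2 * n" t] by simp
  ultimately have "(1 - t ^ (2 * n)) powr (-1/2) \<le> (1 - t) powr (-1/2)"
    by (intro powr_mono2') auto
  moreover have "gen_integrand n t = (1 - t ^ (2 * n)) powr (-1/2)"
    using assms powr_of_nat_nonneg[of t "2 * n"] by (simp add: gen_integrand_def)
  ultimately show ?thesis
    using gen_integrand_pos[of n t] assms False by simp
qed (simp add: gen_integrand_def)

lemma continuous_on_gen_integrand: "1 \<le> n \<Longrightarrow> continuous_on {0..<1} (gen_integrand n)"
proof -
  assume n: "1 \<le> n"
  have "t ^ (2 * n) \<noteq> 1" if "0 \<le> t" "t < 1" for t :: real
    using n that power_less_one_iff[of t "2 * n"] by auto
  then have "continuous_on {0..<1} (\<lambda>t. 1 / sqrt (1 - t ^ (2 * n)))"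
    by (intro continuous_intros) auto
  then show ?thesis
    by (rule continuous_on_cong[THEN iffD1, rotated 2]) (auto simp: gen_integrand_eq[OF n])
qed

lemma gen_integrand_integrable: "1 \<le> n \<Longrightarrow> gen_integrand n integrable_on {0..1}"
proof -
  assume n: "1 \<le> n"
  have neg: "negligible ({0..<1::real} - {0..1} \<union> ({0..1} - {0..<1}))"
    by (rule negligible_subset[of "{1}"]) auto
  have "gen_integrand n integrable_on {0..<1}"
  proof (rule measurable_bounded_by_integrable_imp_integrable_real)
    show "gen_integrand n \<in> borel_measurable (lebesgue_on {0..<1})"
      by (rule continuous_imp_measurable_on_sets_lebesgue[OF continuous_on_gen_integrand[OF n]]) auto
    show "(\<lambda>t::real. (1 - t) powr (-1/2)) integrable_on {0..<1}"
      using has_integral_inverse_sqrt_one_minus integrable_spike_set_eq[OF neg] by blast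
  qed (use gen_integrand_bound[OF n] in auto)
  then show ?thesis using integrable_spike_set_eq[OF neg] by blast
qed

locale gen_trig =
  fixes n :: nat
  assumes n_ge_1: "1 \<le> n"
begin

abbreviation "F \<equiv> Fgen (real n)"
abbreviation "P \<equiv> pi_gen (real n)"
abbreviation "SB \<equiv> sin_base (real n)"
abbreviation "SH \<equiv> sin_half (real n)"
abbreviation "S \<equiv> sin_gen (real n)"
abbreviation "C \<equiv> cos_gen (real n)"

lemma Fgen_eq_integral: "F y = integral {0..y} (gen_integrand n)"
  by (simp add: Fgen_def gen_integrand_def[abs_def])

lemma Fgen_0: "F 0 = 0"
  by (simp add: Fgen_eq_integral)

lemma pi_gen_eq: "P = 2 * F 1"
  by (simp add: pi_gen_def)

lemma continuous_on_Fgen: "continuous_on {0..1} F"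
  unfolding Fgen_eq_integral
  by (rule indefinite_integral_continuous_1[OF gen_integrand_integrable[OF n_ge_1]])

lemma Fgen_has_derivative: "0 < y \<Longrightarrow> y < 1 \<Longrightarrow> (F has_real_derivative gen_integrand n y) (at y)"
proof -
  assume y: "0 < y" "y < 1"
  define b where "b = (1 + y) / 2"
  have b: "y < b" "b < 1" using y by (auto simp: b_def)
  have "continuous_on {0..b} (gen_integrand n)"
    using continuous_on_gen_integrand[OF n_ge_1] by (rule continuous_on_subset) (use b in auto)
  then have "((\<lambda>x. integral {0..x} (gen_integrand n)) has_real_derivative gen_integrand n y)
      (at y within {0..b})"
    by (rule integral_has_real_derivative) (use y b in auto)
  moreover have "at y within {0..b} = at y" by (rule at_within_Icc_at) (use y b in auto)
  ultimately show ?thesis by (simp add: Fgen_eq_integral[abs_def])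
qed

lemma Fgen_strict_mono:
  assumes "0 \<le> y1" "y1 < y2" "y2 \<le> 1"
  shows "F y1 < F y2"
proof (rule DERIV_pos_imp_increasing_open[OF assms(2)])
  fix x assume "y1 < x" "x < y2"
  then have "0 < x" "x < 1" using assms by auto
  then show "\<exists>d. (F has_real_derivative d) (at x) \<and> 0 < d"
    using Fgen_has_derivative gen_integrand_pos[OF n_ge_1] by fastforce
qed (use continuous_on_Fgen assms in \<open>auto elim: continuous_on_subset\<close>)

lemma Fgen_mono: "0 \<le> y1 \<Longrightarrow> y1 \<le> y2 \<Longrightarrow> y2 \<le> 1 \<Longrightarrow> F y1 \<le> F y2"
  using Fgen_strict_mono by (cases "y1 = y2") (auto intro: less_imp_le)

lemma Fgen_inj: "0 \<le> y1 \<Longrightarrow> y1 \<le> 1 \<Longrightarrow> 0 \<le> y2 \<Longrightarrow> y2 \<le> 1 \<Longrightarrow> F y1 = F y2 \<Longrightarrow> y1 = y2"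
  using Fgen_strict_mono by (metis less_irrefl linorder_neqE_linordered_idom)

lemma pi_gen_pos: "0 < P"
  using Fgen_strict_mono[of 0 1] by (simp add: pi_gen_eq Fgen_0)

lemma Fgen_range: "0 \<le> y \<Longrightarrow> y \<le> 1 \<Longrightarrow> 0 \<le> F y \<and> F y \<le> P / 2"
  using Fgen_mono[of 0 y] Fgen_mono[of y 1] by (simp add: Fgen_0 pi_gen_eq)

lemma sin_base_inverse: "0 \<le> s \<Longrightarrow> s \<le> P / 2 \<Longrightarrow> 0 \<le> SB s \<and> SB s \<le> 1 \<and> F (SB s) = s"
proof -
  assume s: "0 \<le> s" "s \<le> P / 2"
  obtain y where y: "0 \<le> y" "y \<le> 1" "F y = s"
    using IVT'[of F 0 s 1] continuous_on_Fgen s by (auto simp: Fgen_0 pi_gen_eq)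
  have "SB s = y"
    unfolding sin_base_def by (rule the_equality) (use y Fgen_inj in auto)
  then show ?thesis using y by simp
qed

lemma sin_base_Fgen: "0 \<le> y \<Longrightarrow> y \<le> 1 \<Longrightarrow> SB (F y) = y"
  using sin_base_inverse[of "F y"] Fgen_range[of y] Fgen_inj by auto

lemma sin_base_0: "SB 0 = 0"
  using sin_base_Fgen[of 0] by (simp add: Fgen_0)

lemma sin_base_half_pi: "SB (P / 2) = 1"
  using sin_base_Fgen[of 1] by (simp add: pi_gen_eq)

lemma sin_base_strict_mono: "0 \<le> s1 \<Longrightarrow> s1 < s2 \<Longrightarrow> s2 \<le> P / 2 \<Longrightarrow> SB s1 < SB s2"
  using sin_base_inverse[of s1] sin_base_inverse[of s2] Fgen_mono[of "SB s2" "SB s1"]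
  by (cases "SB s1 < SB s2") auto

lemma continuous_on_sin_base: "continuous_on {0..P / 2} SB"
proof -
  have "F ` {0..1} = {0..P / 2}"
    using Fgen_range sin_base_inverse by (force intro: image_eqI)
  moreover have "continuous_on (F ` {0..1}) SB"
    by (rule continuous_on_inv[OF continuous_on_Fgen]) (auto simp: sin_base_Fgen)
  ultimately show ?thesis by simp
qed

lemma sin_base_has_derivative:
  assumes s: "0 < s" "s < P / 2"
  shows "(SB has_real_derivative sqrt (1 - SB s ^ (2 * n))) (at s)"
proof -
  have lt: "0 < SB s" "SB s < 1"
    using sin_base_strict_mono[of 0 s] sin_base_strict_mono[of s "P / 2"] s
    by (auto simp: sin_base_0 sin_base_half_pi)
  have "(SB has_real_derivative inverse (gen_integrand n (SB s))) (at s)"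
  proof (rule DERIV_inverse_function[where a=0 and b="P / 2"])
    show "(F has_real_derivative gen_integrand n (SB s)) (at (SB s))"
      using Fgen_has_derivative lt by auto
    show "gen_integrand n (SB s) \<noteq> 0"
      using gen_integrand_pos[OF n_ge_1, of "SB s"] lt by simp
    show "isCont SB s"
      using continuous_on_sin_base s continuous_on_interior[of "{0..P / 2}"] by auto
  qed (use s sin_base_inverse in auto)
  then show ?thesis
    using lt by (simp add: gen_integrand_eq[OF n_ge_1] power_less_one_iff)
qed

lemma sin_half_reflect: "0 \<le> r \<Longrightarrow> r \<le> P \<Longrightarrow> SH (P - r) = SH r"
  unfolding sin_half_def by auto

lemma sin_half_0: "SH 0 = 0" and sin_half_pi: "SH P = 0"
  using pi_gen_pos by (simp_all add: sin_half_def sin_base_0)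

lemma sin_gen_reduce:
  assumes "0 \<le> r" "r < 2 * P"
  shows "S (r + 2 * P * of_int k) = (if r \<le> P then SH r else - SH (2 * P - r))"
proof -
  have "(r + 2 * P * of_int k) / (2 * P) = r / (2 * P) + of_int k"
    using pi_gen_pos by (simp add: field_simps)
  moreover have "0 \<le> r / (2 * P)" "r / (2 * P) < 1" using assms pi_gen_pos by auto
  ultimately have "\<lfloor>(r + 2 * P * of_int k) / (2 * P)\<rfloor> = k"
    by (intro floor_unique) auto
  then show ?thesis unfolding sin_gen_def Let_def by simp
qed

lemma period_decomp:
  obtains r k where "0 \<le> r" "r < 2 * P" "s = r + 2 * P * of_int k"
proof -
  define k where "k = \<lfloor>s / (2 * P)\<rfloor>"
  have "of_int k \<le> s / (2 * P)" "s / (2 * P) < of_int k + 1"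
    unfolding k_def by linarith+
  then show ?thesis
    using pi_gen_pos by (intro that[of "s - 2 * P * of_int k" k]) (simp_all add: field_simps)
qed

lemma sin_gen_periodic: "S (s + 2 * P * of_int k) = S s"
proof -
  obtain r j where r: "0 \<le> r" "r < 2 * P" "s = r + 2 * P * of_int j" by (rule period_decomp)
  then have "s + 2 * P * of_int k = r + 2 * P * of_int (j + k)" by (simp add: algebra_simps)
  then show ?thesis using r sin_gen_reduce[OF r(1,2)] by metis
qed

lemma sin_gen_minus: "S (- s) = - S s"
proof -
  obtain r k where r: "0 \<le> r" "r < 2 * P" "s = r + 2 * P * of_int k" by (rule period_decomp)
  show ?thesis
  proof (cases "r = 0")
    case True
    have zero: "S (0 + 2 * P * of_int j) = 0" for j
      using sin_gen_reduce[of 0 j] pi_gen_pos by (simp add: sin_half_0)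
    have "S (- s) = S (0 + 2 * P * of_int (- k))" using r True by simp
    also have "\<dots> = - S (0 + 2 * P * of_int k)" by (simp only: zero minus_zero)
    finally show ?thesis using r True by simp
  next
    case False
    have "S (- s) = S ((2 * P - r) + 2 * P * of_int (- k - 1))" using r by (simp add: algebra_simps)
    also have "\<dots> = (if 2 * P - r \<le> P then SH (2 * P - r) else - SH r)"
      using sin_gen_reduce[of "2 * P - r" "- k - 1"] r False by simp
    also have "\<dots> = - S s"
      using sin_gen_reduce[OF r(1,2), of k] r False by (cases "r = P") (auto simp: sin_half_pi)
    finally show ?thesis .
  qed
qed

lemma sin_gen_reflect: "S (P - s) = S s"
proof -
  obtain r k where r: "0 \<le> r" "r < 2 * P" "s = r + 2 * P * of_int k" by (rule period_decomp)
  show ?thesis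
  proof (cases "r \<le> P")
    case True
    have "S (P - s) = S ((P - r) + 2 * P * of_int (- k))" using r by (simp add: algebra_simps)
    also have "\<dots> = SH r" using sin_gen_reduce[of "P - r" "- k"] r True pi_gen_pos
      by (simp add: sin_half_reflect)
    also have "\<dots> = S s" using sin_gen_reduce[OF r(1,2), of k] r True by simp
    finally show ?thesis .
  next
    case False
    have "S (P - s) = S ((3 * P - r) + 2 * P * of_int (- k - 1))" using r by (simp add: algebra_simps)
    also have "\<dots> = - SH (r - P)" using sin_gen_reduce[of "3 * P - r" "- k - 1"] r False by simp
    also have "\<dots> = - SH (2 * P - r)"
      using sin_half_reflect[of "r - P"] r False by (simp add: algebra_simps)
    also have "\<dots> = S s" using sin_gen_reduce[OF r(1,2), of k] r False by simp
    finally show ?thesis .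
  qed
qed

lemma sin_gen_add_pi: "S (s + P) = - S s"
  using sin_gen_reflect[of "- s"] sin_gen_minus[of s] by (simp add: add.commute)

lemma sin_gen_eq_sin_base: "0 \<le> s \<Longrightarrow> s \<le> P / 2 \<Longrightarrow> S s = SB s"
  using sin_gen_reduce[of s 0] pi_gen_pos by (simp add: sin_half_def)

lemma sin_gen_0: "S 0 = 0" and sin_gen_half_pi: "S (P / 2) = 1"
  using sin_gen_eq_sin_base[of 0] sin_gen_eq_sin_base[of "P / 2"] pi_gen_pos
  by (simp_all add: sin_base_0 sin_base_half_pi)

lemma quarter_period_induct [case_names base reflect minus periodic]:
  assumes base: "\<And>s. 0 \<le> s \<Longrightarrow> s \<le> P / 2 \<Longrightarrow> Q s"
    and reflect: "\<And>s. Q s \<Longrightarrow> Q (P - s)"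
    and minus: "\<And>s. Q s \<Longrightarrow> Q (- s)"
    and periodic: "\<And>s k. Q s \<Longrightarrow> Q (s + 2 * P * of_int k)"
  shows "Q s"
proof -
  have half: "Q s" if "0 \<le> s" "s \<le> P" for s
    using base[of s] base[of "P - s"] reflect[of "P - s"] that by (cases "s \<le> P / 2") auto
  have full: "Q s" if "- P \<le> s" "s \<le> P" for s
    using half[of s] half[of "- s"] minus[of "- s"] that by (cases "0 \<le> s") auto
  obtain r k where r: "0 \<le> r" "r < 2 * P" "s = r + 2 * P * of_int k" by (rule period_decomp)
  show ?thesis
  proof (cases "r \<le> P")
    case True then show ?thesis using full[of r] periodic[of r k] r by auto
  next
    case False
    have s: "s = (r - 2 * P) + 2 * P * of_int (k + 1)" using r by (simp add: algebra_simps)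
    show ?thesis unfolding s by (intro periodic full) (use r False in auto)
  qed
qed

lemma continuous_on_sin_gen_quarter: "continuous_on {0..P / 2} S"
  using continuous_on_sin_base
  by (rule continuous_on_cong[THEN iffD1, rotated 2]) (auto simp: sin_gen_eq_sin_base)

lemma continuous_on_sin_gen_around_0: "continuous_on {- P / 2..P / 2} S"
proof -
  have "continuous_on {- P / 2..0} (\<lambda>t. - S (- t))"
    by (intro continuous_intros continuous_on_compose2[OF continuous_on_sin_gen_quarter]) auto
  then have "continuous_on {- P / 2..0} S" by (simp add: sin_gen_minus)
  then have "continuous_on ({- P / 2..0} \<union> {0..P / 2}) S"
    by (intro continuous_on_closed_Un continuous_on_sin_gen_quarter) auto
  moreover have "{- P / 2..0} \<union> {0..P / 2} = {- P / 2..P / 2}" using pi_gen_pos by auto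
  ultimately show ?thesis by simp
qed

lemma continuous_on_sin_gen_around_half_pi: "continuous_on {0..P} S"
proof -
  have "continuous_on {P / 2..P} (\<lambda>t. S (P - t))"
    by (intro continuous_intros continuous_on_compose2[OF continuous_on_sin_gen_quarter]) auto
  then have "continuous_on {P / 2..P} S" by (simp add: sin_gen_reflect)
  then have "continuous_on ({0..P / 2} \<union> {P / 2..P}) S"
    by (intro continuous_on_closed_Un continuous_on_sin_gen_quarter) auto
  moreover have "{0..P / 2} \<union> {P / 2..P} = {0..P}" using pi_gen_pos by auto
  ultimately show ?thesis by simp
qed

lemma sin_gen_has_derivative_quarter:
  assumes "0 < s" "s < P / 2"
  shows "(S has_real_derivative sqrt (1 - S s ^ (2 * n))) (at s)"
proof -
  have "(SB has_real_derivative sqrt (1 - S s ^ (2 * n))) (at s)"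
    using sin_base_has_derivative assms by (simp add: sin_gen_eq_sin_base)
  then show ?thesis
    by (rule has_field_derivative_transform_within_open[where S="{0<..<P / 2}"])
      (use assms in \<open>auto simp: sin_gen_eq_sin_base\<close>)
qed

lemma sin_gen_has_derivative_near_0:
  assumes "- P / 2 < s" "s < P / 2" "s \<noteq> 0"
  shows "(S has_real_derivative sqrt (1 - S s ^ (2 * n))) (at s)"
proof (cases "0 < s")
  case False
  then have "(S has_real_derivative sqrt (1 - S s ^ (2 * n))) (at ((-1) * s + 0))"
    using sin_gen_has_derivative_quarter[of "- s"] assms by (simp add: sin_gen_minus power_mult)
  from DERIV_affine_symmetry[OF _ _ this, of "-1"] show ?thesis by (simp add: sin_gen_minus)
qed (use sin_gen_has_derivative_quarter assms in auto)

lemma sin_gen_has_derivative_near_half_pi: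
  assumes "0 < s" "s < P" "s \<noteq> P / 2"
  shows "(S has_real_derivative (if s < P / 2 then 1 else -1) * sqrt (1 - S s ^ (2 * n))) (at s)"
proof (cases "s < P / 2")
  case False
  then have "(S has_real_derivative sqrt (1 - S s ^ (2 * n))) (at ((-1) * s + P))"
    using sin_gen_has_derivative_quarter[of "P - s"] assms by (simp add: sin_gen_reflect)
  from DERIV_affine_symmetry[OF _ _ this, of 1] False show ?thesis by (simp add: sin_gen_reflect)
qed (use sin_gen_has_derivative_quarter assms in auto)

lemma sin_gen_has_derivative_0: "(S has_real_derivative 1) (at 0)"
proof (rule DERIV_from_derivative_limit[where e="P / 2" and f'="\<lambda>t. sqrt (1 - S t ^ (2 * n))"])
  have "isCont S 0"
    using continuous_on_interior[OF continuous_on_sin_gen_around_0, of 0] pi_gen_pos by simp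
  then have "isCont (\<lambda>t. sqrt (1 - S t ^ (2 * n))) 0"
    by (intro continuous_intros)
  then show "((\<lambda>t. sqrt (1 - S t ^ (2 * n))) \<longlongrightarrow> 1) (at 0)"
    using n_ge_1 by (simp add: isCont_def sin_gen_0 power_0_left)
qed (use pi_gen_pos continuous_on_sin_gen_around_0 sin_gen_has_derivative_near_0 in auto)

lemma sin_gen_has_derivative_half_pi: "(S has_real_derivative 0) (at (P / 2))"
proof (rule DERIV_from_derivative_limit[where e="P / 2"
      and f'="\<lambda>t. (if t < P / 2 then 1 else -1) * sqrt (1 - S t ^ (2 * n))"])
  have "isCont S (P / 2)"
    using continuous_on_interior[OF continuous_on_sin_gen_around_half_pi, of "P / 2"] pi_gen_pos
    by simp
  then have "isCont (\<lambda>t. sqrt (1 - S t ^ (2 * n))) (P / 2)"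
    by (intro continuous_intros)
  then have "((\<lambda>t. \<bar>sqrt (1 - S t ^ (2 * n))\<bar>) \<longlongrightarrow> 0) (at (P / 2))"
    using tendsto_rabs by (fastforce simp: isCont_def sin_gen_half_pi)
  then have "((\<lambda>t. \<bar>(if t < P / 2 then 1 else -1) * sqrt (1 - S t ^ (2 * n))\<bar>) \<longlongrightarrow> 0) (at (P / 2))"
    by (rule Lim_transform_eventually) (auto simp: abs_mult)
  then show "((\<lambda>t. (if t < P / 2 then 1 else -1) * sqrt (1 - S t ^ (2 * n))) \<longlongrightarrow> 0) (at (P / 2))"
    by (simp only: tendsto_rabs_zero_iff)
qed (use pi_gen_pos continuous_on_sin_gen_around_half_pi sin_gen_has_derivative_near_half_pi in auto)

lemma sin_gen_differentiable: "\<exists>D. (S has_real_derivative D) (at s)"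
proof (induction s rule: quarter_period_induct)
  case (base s)
  then consider "s = 0" | "s = P / 2" | "0 < s" "s < P / 2" by linarith
  then show ?case
  proof cases
    case 2 then show ?thesis using sin_gen_has_derivative_half_pi by blast
  qed (use sin_gen_has_derivative_0 sin_gen_has_derivative_quarter in auto)
next
  case (reflect s)
  then obtain D where "(S has_real_derivative D) (at ((-1) * (P - s) + P))" by auto
  from DERIV_affine_symmetry[OF _ _ this, of 1] show ?case by (auto simp: sin_gen_reflect)
next
  case (minus s)
  then obtain D where "(S has_real_derivative D) (at ((-1) * (- s) + 0))" by auto
  from DERIV_affine_symmetry[OF _ _ this, of "-1"] show ?case by (auto simp: sin_gen_minus)
next
  case (periodic s k)
  then obtain D where "(S has_real_derivative D) (at (1 * (s + 2 * P * of_int k) + 2 * P * of_int (- k)))"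
    by auto
  from DERIV_affine_symmetry[OF _ _ this, of 1] sin_gen_periodic[of _ "- k"] show ?case by auto
qed

lemma sin_gen_has_derivative: "(S has_real_derivative C s) (at s)"
  using sin_gen_differentiable[of s] DERIV_imp_deriv by (fastforce simp: cos_gen_def)

lemma continuous_on_sin_gen: "continuous_on A S"
  using sin_gen_has_derivative by (meson DERIV_isCont continuous_at_imp_continuous_on)

lemma cos_gen_quarter: "0 \<le> s \<Longrightarrow> s \<le> P / 2 \<Longrightarrow> C s = sqrt (1 - S s ^ (2 * n))"
proof -
  assume s: "0 \<le> s" "s \<le> P / 2"
  consider "s = 0" | "s = P / 2" | "0 < s" "s < P / 2" using s by linarith
  then show ?thesis
  proof cases
    case 1 then show ?thesis
      using DERIV_unique[OF sin_gen_has_derivative sin_gen_has_derivative_0] n_ge_1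
      by (simp add: sin_gen_0 power_0_left)
  next
    case 2 then show ?thesis unfolding 2
      using DERIV_unique[OF sin_gen_has_derivative sin_gen_has_derivative_half_pi]
      by (simp add: sin_gen_half_pi)
  next
    case 3 then show ?thesis
      using DERIV_unique[OF sin_gen_has_derivative sin_gen_has_derivative_quarter] by simp
  qed
qed

lemma cos_gen_reflect: "C (P - s) = - C s"
proof -
  have "(S has_real_derivative C s) (at ((-1) * (P - s) + P))" using sin_gen_has_derivative by simp
  from DERIV_affine_symmetry[OF _ _ this, of 1] show ?thesis
    using DERIV_unique[OF sin_gen_has_derivative] by (fastforce simp: sin_gen_reflect)
qed

lemma cos_gen_minus: "C (- s) = C s"
proof -
  have "(S has_real_derivative C s) (at ((-1) * (- s) + 0))" using sin_gen_has_derivative by simp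
  from DERIV_affine_symmetry[OF _ _ this, of "-1"] show ?thesis
    using DERIV_unique[OF sin_gen_has_derivative] by (fastforce simp: sin_gen_minus)
qed

lemma cos_gen_periodic: "C (s + 2 * P * of_int k) = C s"
proof -
  have "(S has_real_derivative C s) (at (1 * (s + 2 * P * of_int k) + 2 * P * of_int (- k)))"
    using sin_gen_has_derivative by simp
  from DERIV_affine_symmetry[OF _ _ this, of 1] show ?thesis
    using DERIV_unique[OF sin_gen_has_derivative] sin_gen_periodic[of _ "- k"] by fastforce
qed

lemma sin_gen_quarter_range: "0 \<le> s \<Longrightarrow> s \<le> P / 2 \<Longrightarrow> 0 \<le> S s \<and> S s \<le> 1"
  using sin_base_inverse[of s] sin_gen_eq_sin_base by auto

lemma cos_gen_sq_add_sin_gen_pow: "C s ^ 2 + S s ^ (2 * n) = 1"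
proof (induction s rule: quarter_period_induct)
  case (base s)
  then have "S s ^ (2 * n) \<le> 1" using sin_gen_quarter_range[OF base] by (simp add: power_le_one)
  then show ?case using cos_gen_quarter[OF base] by simp
qed (simp_all add: cos_gen_reflect sin_gen_reflect cos_gen_minus sin_gen_minus cos_gen_periodic
    sin_gen_periodic power_mult)

lemma abs_sin_gen_le_1: "\<bar>S s\<bar> \<le> 1"
proof -
  have "S s ^ (2 * n) \<le> 1"
    using cos_gen_sq_add_sin_gen_pow[of s] zero_le_power2[of "C s"] by linarith
  then have "\<bar>S s\<bar> ^ (2 * n) \<le> 1" by (simp add: power_even_abs)
  then show ?thesis using n_ge_1 by (simp add: power_le_one_iff)
qed

lemma cos_gen_around_0: "- P / 2 \<le> s \<Longrightarrow> s \<le> P / 2 \<Longrightarrow> C s = sqrt (1 - S s ^ (2 * n))"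
  using cos_gen_quarter[of s] cos_gen_quarter[of "- s"] cos_gen_minus[of s] sin_gen_minus[of s]
  by (cases "0 \<le> s") (auto simp: power_mult)

lemma sin_gen_strict_mono_quarter: "0 \<le> s1 \<Longrightarrow> s1 < s2 \<Longrightarrow> s2 \<le> P / 2 \<Longrightarrow> S s1 < S s2"
  using sin_base_strict_mono[of s1 s2] sin_gen_eq_sin_base[of s1] sin_gen_eq_sin_base[of s2] by auto

lemma abs_sin_gen_less_1: "- P / 2 < s \<Longrightarrow> s < P / 2 \<Longrightarrow> \<bar>S s\<bar> < 1"
proof -
  assume s: "- P / 2 < s" "s < P / 2"
  then have "S \<bar>s\<bar> < 1" using sin_gen_strict_mono_quarter[of "\<bar>s\<bar>" "P / 2"] by (simp add: sin_gen_half_pi)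
  moreover have "\<bar>S s\<bar> = S \<bar>s\<bar>"
    using sin_gen_minus[of s] sin_gen_quarter_range[of "\<bar>s\<bar>"] s by (cases "0 \<le> s") auto
  ultimately show ?thesis by simp
qed

lemma cos_gen_has_derivative_near_0:
  assumes s: "- P / 2 < s" "s < P / 2"
  shows "(C has_real_derivative - (real n * S s ^ (2 * n - 1))) (at s)"
proof -
  have "\<bar>S s\<bar> ^ (2 * n) < 1"
    using abs_sin_gen_less_1[OF s] n_ge_1 by (simp add: power_less_one_iff)
  then have pos: "0 < 1 - S s ^ (2 * n)" by (simp add: power_even_abs)
  have "S s * S s ^ (2 * n - 1) = S s ^ (2 * n)"
    using n_ge_1 by (simp add: power_Suc[symmetric])
  then have "((\<lambda>t. sqrt (1 - S t ^ (2 * n))) has_real_derivative - (real n * S s ^ (2 * n - 1))) (at s)"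
    using pos cos_gen_around_0[of s] s
    by (auto intro!: derivative_eq_intros sin_gen_has_derivative simp: field_simps)
  then show ?thesis
    by (rule has_field_derivative_transform_within_open[where S="{- P / 2<..<P / 2}"])
      (use s in \<open>auto simp: cos_gen_around_0\<close>)
qed

lemma continuous_on_cos_gen_around_half_pi: "continuous_on {0..P} C"
proof -
  have c1: "continuous_on {0..P / 2} C"
  proof -
    have "continuous_on {0..P / 2} (\<lambda>t. sqrt (1 - S t ^ (2 * n)))"
      by (intro continuous_intros continuous_on_sin_gen)
    then show ?thesis by (rule continuous_on_cong[THEN iffD1, rotated 2]) (auto simp: cos_gen_quarter)
  qed
  have "continuous_on {P / 2..P} (\<lambda>t. - C (P - t))"
    by (intro continuous_intros continuous_on_compose2[OF c1]) auto
  then have "continuous_on {P / 2..P} C" by (simp add: cos_gen_reflect)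
  then have "continuous_on ({0..P / 2} \<union> {P / 2..P}) C"
    by (intro continuous_on_closed_Un c1) auto
  moreover have "{0..P / 2} \<union> {P / 2..P} = {0..P}" using pi_gen_pos by auto
  ultimately show ?thesis by simp
qed

lemma cos_gen_has_derivative_reflect:
  "(C has_real_derivative - (real n * S s ^ (2 * n - 1))) (at s) \<Longrightarrow>
    (C has_real_derivative - (real n * S (P - s) ^ (2 * n - 1))) (at (P - s))"
proof -
  assume "(C has_real_derivative - (real n * S s ^ (2 * n - 1))) (at s)"
  then have "(C has_real_derivative - (real n * S s ^ (2 * n - 1))) (at ((-1) * (P - s) + P))"
    by simp
  from DERIV_affine_symmetry[OF _ _ this, of "-1"] show ?thesis
    by (simp add: cos_gen_reflect sin_gen_reflect)
qed

lemma cos_gen_has_derivative_half_pi: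
  "(C has_real_derivative - (real n * S (P / 2) ^ (2 * n - 1))) (at (P / 2))"
proof (rule DERIV_from_derivative_limit[where e="P / 2"])
  fix t assume t: "P / 2 - P / 2 < t" "t < P / 2 + P / 2" "t \<noteq> P / 2"
  show "(C has_real_derivative - (real n * S t ^ (2 * n - 1))) (at t)"
  proof (cases "t < P / 2")
    case False
    then have "(C has_real_derivative - (real n * S (P - t) ^ (2 * n - 1))) (at (P - t))"
      using cos_gen_has_derivative_near_0 t by auto
    from cos_gen_has_derivative_reflect[OF this] show ?thesis by simp
  qed (use cos_gen_has_derivative_near_0 t in auto)
next
  have "isCont (\<lambda>t. - (real n * S t ^ (2 * n - 1))) (P / 2)"
    using sin_gen_has_derivative DERIV_isCont by (intro continuous_intros) blast
  then show "((\<lambda>t. - (real n * S t ^ (2 * n - 1))) \<longlongrightarrow> - (real n * S (P / 2) ^ (2 * n - 1))) (at (P / 2))"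
    by (simp add: isCont_def)
qed (use pi_gen_pos continuous_on_cos_gen_around_half_pi in auto)

lemma cos_gen_has_derivative: "(C has_real_derivative - (real n * S s ^ (2 * n - 1))) (at s)"
proof (induction s rule: quarter_period_induct)
  case (base s)
  show ?case
  proof (cases "s = P / 2")
    case True show ?thesis unfolding True by (rule cos_gen_has_derivative_half_pi)
  qed (use base cos_gen_has_derivative_near_0[of s] pi_gen_pos in auto)
next
  case (reflect s)
  then show ?case by (rule cos_gen_has_derivative_reflect)
next
  case (minus s)
  then have "(C has_real_derivative - (real n * S s ^ (2 * n - 1))) (at ((-1) * (- s) + 0))" by simp
  from DERIV_affine_symmetry[OF _ _ this, of 1] show ?case
    using n_ge_1 by (simp add: cos_gen_minus sin_gen_minus power_minus_odd)
next
  case (periodic s k)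
  then have "(C has_real_derivative - (real n * S s ^ (2 * n - 1)))
      (at (1 * (s + 2 * P * of_int k) + 2 * P * of_int (- k)))" by simp
  from DERIV_affine_symmetry[OF _ _ this, of 1] show ?case
    using cos_gen_periodic[of _ "- k"] sin_gen_periodic by auto
qed

lemma cos_gen_half_pi: "C (P / 2) = 0"
  using cos_gen_quarter[of "P / 2"] pi_gen_pos by (simp add: sin_gen_half_pi)

lemma cos_gen_3_half_pi: "C (3 * P / 2) = 0"
  using cos_gen_reflect[of "- P / 2"] cos_gen_minus[of "P / 2"] cos_gen_half_pi
  by (simp add: field_simps)

lemma sin_gen_surj_quarter: "0 \<le> y \<Longrightarrow> y \<le> 1 \<Longrightarrow> \<exists>s. 0 \<le> s \<and> s \<le> P / 2 \<and> S s = y"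
  using IVT'[of S 0 y "P / 2"] continuous_on_sin_gen[of "{0..P / 2}"] pi_gen_pos
  by (auto simp: sin_gen_0 sin_gen_half_pi)

lemma cos_gen_sin_gen_surj:
  assumes pq: "p\<^sup>2 + q ^ (2 * n) = 1"
  shows "\<exists>\<theta>. C \<theta> = p \<and> S \<theta> = q"
proof -
  have "q ^ (2 * n) \<le> 1" using pq zero_le_power2[of p] by linarith
  then have "\<bar>q\<bar> ^ (2 * n) \<le> 1" by (simp add: power_even_abs)
  then have "\<bar>q\<bar> \<le> 1" using n_ge_1 by (simp add: power_le_one_iff)
  then obtain t where t: "0 \<le> t" "t \<le> P / 2" "S t = \<bar>q\<bar>" using sin_gen_surj_quarter[of "\<bar>q\<bar>"] by auto
  have "1 - q ^ (2 * n) = p\<^sup>2" using pq by simp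
  then have Ct: "C t = \<bar>p\<bar>" using cos_gen_quarter[OF t(1,2)] t(3) by (simp add: power_even_abs)
  consider "0 \<le> q" "0 \<le> p" | "0 \<le> q" "p < 0" | "q < 0" "0 \<le> p" | "q < 0" "p < 0" by linarith
  then show ?thesis
  proof cases
    case 1 then show ?thesis using t Ct by (intro exI[of _ t]) auto
  next
    case 2 then show ?thesis using t Ct by (intro exI[of _ "P - t"]) (auto simp: cos_gen_reflect sin_gen_reflect)
  next
    case 3 then show ?thesis using t Ct by (intro exI[of _ "- t"]) (auto simp: cos_gen_minus sin_gen_minus)
  next
    case 4 then show ?thesis
      using t Ct cos_gen_minus[of "P - t"] sin_gen_minus[of "P - t"]
      by (intro exI[of _ "t - P"]) (auto simp: cos_gen_reflect sin_gen_reflect)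
  qed
qed

lemma sin_gen_mono_quarter: "0 \<le> a \<Longrightarrow> a \<le> b \<Longrightarrow> b \<le> P / 2 \<Longrightarrow> S a \<le> S b"
  using sin_gen_strict_mono_quarter[of a b] by (cases "a = b") auto

lemma abs_sin_gen_le_near_zeros:
  assumes d: "0 \<le> d" "d \<le> P / 2" and \<phi>: "0 \<le> \<phi>" "\<phi> < 2 * P"
    and near: "\<phi> \<le> d \<or> \<bar>\<phi> - P\<bar> \<le> d \<or> 2 * P - \<phi> \<le> d"
  shows "\<bar>S \<phi>\<bar> \<le> S d"
proof -
  obtain r where r: "0 \<le> r" "r \<le> d" "\<bar>S \<phi>\<bar> = S r"
  proof -
    consider "\<phi> \<le> d" | "\<phi> \<le> P" "P - \<phi> \<le> d" | "P \<le> \<phi>" "\<phi> - P \<le> d" | "2 * P - \<phi> \<le> d"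
      using near by linarith
    then show ?thesis
    proof cases
      case 1 then show ?thesis using \<phi> d sin_gen_quarter_range[of \<phi>] by (intro that[of \<phi>]) auto
    next
      case 2 then show ?thesis
        using d sin_gen_quarter_range[of "P - \<phi>"] sin_gen_reflect[of \<phi>] by (intro that[of "P - \<phi>"]) auto
    next
      case 3 then show ?thesis
        using d sin_gen_quarter_range[of "\<phi> - P"] sin_gen_add_pi[of "\<phi> - P"] by (intro that[of "\<phi> - P"]) auto
    next
      case 4 then show ?thesis
        using \<phi> d sin_gen_quarter_range[of "2 * P - \<phi>"] sin_gen_minus[of "2 * P - \<phi>"]
          sin_gen_periodic[of "\<phi> - 2 * P" 1]
        by (intro that[of "2 * P - \<phi>"]) auto
    qed
  qed
  then show ?thesis using sin_gen_mono_quarter[of r d] d by auto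
qed

lemma sin_gen_le_abs_away_from_zeros:
  assumes d: "0 \<le> d" "d \<le> P / 2"
    and away: "d \<le> \<phi> \<and> \<phi> \<le> P - d \<or> P + d \<le> \<phi> \<and> \<phi> \<le> 2 * P - d"
  shows "S d \<le> \<bar>S \<phi>\<bar>"
proof -
  obtain r where r: "d \<le> r" "r \<le> P / 2" "\<bar>S \<phi>\<bar> = S r"
  proof -
    consider "d \<le> \<phi>" "\<phi> \<le> P / 2" | "P / 2 \<le> \<phi>" "\<phi> \<le> P - d"
      | "P + d \<le> \<phi>" "\<phi> \<le> 3 * P / 2" | "3 * P / 2 \<le> \<phi>" "\<phi> \<le> 2 * P - d"
      using away by linarith
    then show ?thesis
    proof cases
      case 1 then show ?thesis using d sin_gen_quarter_range[of \<phi>] by (intro that[of \<phi>]) auto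
    next
      case 2 then show ?thesis
        using d sin_gen_quarter_range[of "P - \<phi>"] sin_gen_reflect[of \<phi>] by (intro that[of "P - \<phi>"]) auto
    next
      case 3 then show ?thesis
        using d sin_gen_quarter_range[of "\<phi> - P"] sin_gen_add_pi[of "\<phi> - P"] by (intro that[of "\<phi> - P"]) auto
    next
      case 4 then show ?thesis
        using d sin_gen_quarter_range[of "2 * P - \<phi>"] sin_gen_minus[of "2 * P - \<phi>"]
          sin_gen_periodic[of "\<phi> - 2 * P" 1]
        by (intro that[of "2 * P - \<phi>"]) auto
    qed
  qed
  then show ?thesis using sin_gen_mono_quarter[of d r] d by auto
qed

end

section \<open>Conservation laws of Hamilton's equations\<close>

lemma zero_derivative_const_nonneg:
  fixes f :: "real \<Rightarrow> real"
  assumes "\<And>t. 0 \<le> t \<Longrightarrow> (f has_real_derivative 0) (at t within {0..})" and "0 \<le> t"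
  shows "f t = f 0"
proof -
  obtain c where "\<forall>x\<in>{0..}. f x = c"
    using has_field_derivative_zero_constant[of "{0..}" f] assms(1) by auto
  then show ?thesis using assms(2) by auto
qed

context
  fixes \<alpha> \<beta> :: nat and x0 y0 z0 u0 v0 w0 :: real and X Y Z U V W :: "real \<Rightarrow> real"
  assumes sol: "ham_sol \<alpha> \<beta> (x0, y0, z0) (u0, v0, w0) X Y Z U V W"
begin

lemma ham_sol_yv_energy:
  assumes "1 \<le> \<beta>" "0 \<le> t"
  shows "(V t)\<^sup>2 + Y t ^ (2 * \<beta>) * (W t)\<^sup>2 = v0\<^sup>2 + y0 ^ (2 * \<beta>) * w0\<^sup>2"
proof -
  have "((\<lambda>t. (V t)\<^sup>2 + Y t ^ (2 * \<beta>) * (W t)\<^sup>2) has_real_derivative 0) (at t within {0..})"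
    if "0 \<le> t" for t
  proof -
    have "(Y has_real_derivative X t ^ (2 * \<alpha>) * V t) (at t within {0..})"
      and "(V has_real_derivative - (real \<beta> * X t ^ (2 * \<alpha>) * Y t ^ (2 * \<beta> - 1) * (W t)\<^sup>2))
             (at t within {0..})"
      and "(W has_real_derivative 0) (at t within {0..})"
      using sol that by (auto simp: ham_sol_def)
    then have "((\<lambda>t. (V t)\<^sup>2 + Y t ^ (2 * \<beta>) * (W t)\<^sup>2) has_real_derivative
        2 * V t * (- (real \<beta> * X t ^ (2 * \<alpha>) * Y t ^ (2 * \<beta> - 1) * (W t)\<^sup>2)) +
        real (2 * \<beta>) * Y t ^ (2 * \<beta> - 1) * (X t ^ (2 * \<alpha>) * V t) * (W t)\<^sup>2) (at t within {0..})"
      by (auto intro!: derivative_eq_intros simp: power2_eq_square)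
    then show ?thesis by (simp add: algebra_simps)
  qed
  from zero_derivative_const_nonneg[OF this \<open>0 \<le> t\<close>] show ?thesis
    using sol by (simp add: ham_sol_def)
qed

lemma ham_sol_xu_energy:
  assumes "1 \<le> \<alpha>" "1 \<le> \<beta>" "0 \<le> t"
  defines "c \<equiv> v0\<^sup>2 + y0 ^ (2 * \<beta>) * w0\<^sup>2"
  shows "(U t)\<^sup>2 + c * X t ^ (2 * \<alpha>) = u0\<^sup>2 + c * x0 ^ (2 * \<alpha>)"
proof -
  have "((\<lambda>t. (U t)\<^sup>2 + c * X t ^ (2 * \<alpha>)) has_real_derivative 0) (at t within {0..})"
    if "0 \<le> t" for t
  proof -
    have "(U has_real_derivative
        - (real \<alpha> * X t ^ (2 * \<alpha> - 1) * ((V t)\<^sup>2 + Y t ^ (2 * \<beta>) * (W t)\<^sup>2))) (at t within {0..})"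
      using sol that by (simp add: ham_sol_def)
    then have "(U has_real_derivative - (real \<alpha> * X t ^ (2 * \<alpha> - 1) * c)) (at t within {0..})"
      using ham_sol_yv_energy[OF \<open>1 \<le> \<beta>\<close> that] by (simp add: c_def)
    moreover have "(X has_real_derivative U t) (at t within {0..})"
      using sol that by (simp add: ham_sol_def)
    ultimately show ?thesis
      using \<open>1 \<le> \<alpha>\<close> by (auto intro!: derivative_eq_intros simp: power2_eq_square algebra_simps)
  qed
  from zero_derivative_const_nonneg[OF this \<open>0 \<le> t\<close>] show ?thesis
    using sol by (simp add: ham_sol_def)
qed

end

section \<open>Geodesics with u0 = 0\<close>

locale vertical_covector = A: gen_trig \<alpha> + B: gen_trig \<beta> for \<alpha> \<beta> :: nat +
  fixes x0 y0 z0 v0 w0 :: real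
  assumes x0_nonzero: "x0 \<noteq> 0" and y0_nonzero: "y0 \<noteq> 0"
    and unit_level: "x0 ^ (2 * \<alpha>) * (v0\<^sup>2 + y0 ^ (2 * \<beta>) * w0\<^sup>2) = 1"
begin

definition "c = v0\<^sup>2 + y0 ^ (2 * \<beta>) * w0\<^sup>2"
definition "\<omega> = 1 / \<bar>x0\<bar>"
definition "phase t = \<omega> * t + A.P / 2"
definition "xs t = x0 * A.S (phase t)"
definition "us t = x0 * \<omega> * A.C (phase t)"

(* A primitive of xs^(2 alpha): by C^2 + S^(2 alpha) = 1, the derivative of S(phase t) C(phase t)
   is omega (1 - (alpha + 1) S(phase t)^(2 alpha)). *)
definition "Ix t = x0 ^ (2 * \<alpha>) / (real \<alpha> + 1) * (t - A.S (phase t) * A.C (phase t) / \<omega>)"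

lemma x0_pow_pos: "0 < x0 ^ (2 * \<alpha>)"
  using x0_nonzero by (simp add: zero_less_power_eq)

lemma c_eq: "c = 1 / x0 ^ (2 * \<alpha>)"
proof -
  have "c * x0 ^ (2 * \<alpha>) = 1" unfolding c_def using unit_level by (simp only: mult.commute)
  then show ?thesis using x0_nonzero by (simp add: eq_divide_eq)
qed

lemma c_pos: "0 < c"
  using x0_pow_pos by (simp add: c_eq)

lemma \<omega>_pos: "0 < \<omega>"
  using x0_nonzero by (simp add: \<omega>_def)

lemma x0_\<omega>_sq: "x0 * \<omega>\<^sup>2 = x0 ^ (2 * \<alpha> - 1) * c"
proof -
  have "x0 ^ (2 * \<alpha>) = x0 * x0 ^ (2 * \<alpha> - 1)" using A.n_ge_1 by (simp flip: power_Suc)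
  then have "x0 ^ (2 * \<alpha> - 1) * c = x0 ^ (2 * \<alpha> - 1) / (x0 * x0 ^ (2 * \<alpha> - 1))"
    by (simp add: c_eq)
  also have "\<dots> = 1 / x0" using x0_nonzero by (intro nonzero_divide_mult_cancel_right) simp
  moreover have "x0 * \<omega>\<^sup>2 = 1 / x0" using x0_nonzero by (simp add: \<omega>_def power2_eq_square)
  ultimately show ?thesis by simp
qed

lemma phase_has_derivative: "(phase has_real_derivative \<omega>) (at t)"
  unfolding phase_def[abs_def] by (auto intro!: derivative_eq_intros)

lemma sin_phase_has_derivative: "((\<lambda>t. A.S (phase t)) has_real_derivative A.C (phase t) * \<omega>) (at t)"
  by (rule DERIV_chain2[OF A.sin_gen_has_derivative phase_has_derivative])

lemma cos_phase_has_derivative: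
  "((\<lambda>t. A.C (phase t)) has_real_derivative - (real \<alpha> * A.S (phase t) ^ (2 * \<alpha> - 1)) * \<omega>) (at t)"
  by (rule DERIV_chain2[OF A.cos_gen_has_derivative phase_has_derivative])

lemma phase_0: "phase 0 = A.P / 2"
  by (simp add: phase_def)

lemma xs_0: "xs 0 = x0" and us_0: "us 0 = 0" and Ix_0: "Ix 0 = 0"
  by (simp_all add: xs_def us_def Ix_def phase_0 A.sin_gen_half_pi A.cos_gen_half_pi)

lemma xs_has_derivative: "(xs has_real_derivative us t) (at t)"
  unfolding xs_def[abs_def] us_def
  using DERIV_cmult[OF sin_phase_has_derivative, of x0] by (simp add: mult_ac)

lemma us_has_derivative: "(us has_real_derivative - (real \<alpha> * xs t ^ (2 * \<alpha> - 1) * c)) (at t)"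
proof -
  have D: "(us has_real_derivative x0 * \<omega> * (- (real \<alpha> * A.S (phase t) ^ (2 * \<alpha> - 1)) * \<omega>)) (at t)"
    unfolding us_def[abs_def] by (rule DERIV_cmult[OF cos_phase_has_derivative])
  have "x0 * \<omega> * (- (real \<alpha> * A.S (phase t) ^ (2 * \<alpha> - 1)) * \<omega>)
      = - (real \<alpha> * A.S (phase t) ^ (2 * \<alpha> - 1) * (x0 * \<omega>\<^sup>2))"
    by (simp add: power2_eq_square)
  also have "\<dots> = - (real \<alpha> * A.S (phase t) ^ (2 * \<alpha> - 1) * (x0 ^ (2 * \<alpha> - 1) * c))"
    by (simp only: x0_\<omega>_sq)
  also have "\<dots> = - (real \<alpha> * xs t ^ (2 * \<alpha> - 1) * c)"
    by (simp add: xs_def power_mult_distrib)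
  finally show ?thesis using D by (simp only:)
qed

lemma Ix_has_derivative: "(Ix has_real_derivative xs t ^ (2 * \<alpha>)) (at t)"
proof -
  let ?s = "A.S (phase t)" and ?c = "A.C (phase t)"
  have "((\<lambda>t. A.S (phase t) * A.C (phase t)) has_real_derivative
      ?c * \<omega> * ?c + ?s * (- (real \<alpha> * ?s ^ (2 * \<alpha> - 1)) * \<omega>)) (at t)"
    using DERIV_mult[OF sin_phase_has_derivative cos_phase_has_derivative] by (simp add: mult_ac)
  then have "(Ix has_real_derivative x0 ^ (2 * \<alpha>) / (real \<alpha> + 1) *
       (1 - (?c * \<omega> * ?c + ?s * (- (real \<alpha> * ?s ^ (2 * \<alpha> - 1)) * \<omega>)) / \<omega>)) (at t)"
    unfolding Ix_def[abs_def] by (intro DERIV_cmult DERIV_diff DERIV_ident DERIV_cdivide)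
  moreover have "(?c * \<omega> * ?c + ?s * (- (real \<alpha> * ?s ^ (2 * \<alpha> - 1)) * \<omega>)) / \<omega>
      = 1 - (real \<alpha> + 1) * ?s ^ (2 * \<alpha>)"
  proof -
    have "?s * ?s ^ (2 * \<alpha> - 1) = ?s ^ (2 * \<alpha>)" using A.n_ge_1 by (simp flip: power_Suc)
    moreover have "?c\<^sup>2 = 1 - ?s ^ (2 * \<alpha>)" using A.cos_gen_sq_add_sin_gen_pow[of "phase t"] by simp
    ultimately show ?thesis using \<omega>_pos by (simp add: field_simps power2_eq_square)
  qed
  ultimately show ?thesis by (simp add: xs_def power_mult_distrib)
qed

lemma abs_xs_le: "\<bar>xs t\<bar> \<le> \<bar>x0\<bar>"
  using A.abs_sin_gen_le_1[of "phase t"] by (simp add: xs_def abs_mult mult_left_le)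

lemma continuous_on_xs: "continuous_on A xs"
  using xs_has_derivative by (meson DERIV_isCont continuous_at_imp_continuous_on)

lemma continuous_on_Ix: "continuous_on A Ix"
  using Ix_has_derivative by (meson DERIV_isCont continuous_at_imp_continuous_on)

(* In the time Ix t, the (y, v) part of Hamilton's equations becomes the autonomous system
   y' = v, v' = - beta w0^2 y^(2 beta - 1), solved by a generalised sine of amplitude amp. *)
definition "amp = root (2 * \<beta>) (c / w0\<^sup>2)"
definition "\<kappa> = \<bar>w0\<bar> * amp ^ (\<beta> - 1)"
definition "phase0 = (SOME \<theta>. B.C \<theta> = v0 / (amp * \<kappa>) \<and> B.S \<theta> = y0 / amp)"
definition "yt s = (if w0 = 0 then y0 + v0 * s else amp * B.S (\<kappa> * s + phase0))"
definition "vt s = (if w0 = 0 then v0 else amp * \<kappa> * B.C (\<kappa> * s + phase0))"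

lemma amp_pos: "w0 \<noteq> 0 \<Longrightarrow> 0 < amp"
  unfolding amp_def using c_pos B.n_ge_1 by simp

lemma amp_pow: "w0 \<noteq> 0 \<Longrightarrow> amp ^ (2 * \<beta>) = c / w0\<^sup>2"
  unfolding amp_def using c_pos B.n_ge_1 by (simp add: real_root_pow_pos2)

lemma amp_\<kappa>_sq: "amp * \<kappa>\<^sup>2 = w0\<^sup>2 * amp ^ (2 * \<beta> - 1)"
proof -
  have "2 * \<beta> - 1 = Suc ((\<beta> - 1) * 2)" using B.n_ge_1 by simp
  moreover have "(amp ^ (\<beta> - 1))\<^sup>2 = amp ^ ((\<beta> - 1) * 2)" by (simp add: power_mult)
  ultimately show ?thesis unfolding \<kappa>_def by (simp add: power_mult_distrib)
qed

lemma amp_sq_\<kappa>_sq: "w0 \<noteq> 0 \<Longrightarrow> amp\<^sup>2 * \<kappa>\<^sup>2 = c"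
proof -
  assume w: "w0 \<noteq> 0"
  have "amp * amp ^ (2 * \<beta> - 1) = amp ^ (2 * \<beta>)" using B.n_ge_1 by (simp flip: power_Suc)
  then have "amp\<^sup>2 * \<kappa>\<^sup>2 = w0\<^sup>2 * amp ^ (2 * \<beta>)"
    using amp_\<kappa>_sq by (simp add: power2_eq_square mult_ac)
  then show ?thesis using amp_pow[OF w] w by simp
qed

lemma phase0: "w0 \<noteq> 0 \<Longrightarrow> B.C phase0 = v0 / (amp * \<kappa>) \<and> B.S phase0 = y0 / amp"
proof -
  assume w: "w0 \<noteq> 0"
  have "(v0 / (amp * \<kappa>))\<^sup>2 + (y0 / amp) ^ (2 * \<beta>) = v0\<^sup>2 / c + y0 ^ (2 * \<beta>) * w0\<^sup>2 / c"
    using amp_sq_\<kappa>_sq[OF w] amp_pow[OF w] w by (simp add: power_divide power_mult_distrib)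
  also have "\<dots> = 1" using c_pos by (simp add: c_def add_divide_distrib[symmetric])
  finally have "\<exists>\<theta>. B.C \<theta> = v0 / (amp * \<kappa>) \<and> B.S \<theta> = y0 / amp" by (rule B.cos_gen_sin_gen_surj)
  then show ?thesis unfolding phase0_def by (rule someI_ex)
qed

lemma yt_0: "yt 0 = y0" and vt_0: "vt 0 = v0"
  using phase0 amp_pos amp_sq_\<kappa>_sq c_pos by (auto simp: yt_def vt_def)

lemma yt_vt_energy: "(vt s)\<^sup>2 + yt s ^ (2 * \<beta>) * w0\<^sup>2 = c"
proof (cases "w0 = 0")
  case False
  let ?c = "B.C (\<kappa> * s + phase0)" and ?s = "B.S (\<kappa> * s + phase0)"
  have "(vt s)\<^sup>2 + yt s ^ (2 * \<beta>) * w0\<^sup>2 = (amp\<^sup>2 * \<kappa>\<^sup>2) * ?c\<^sup>2 + (amp ^ (2 * \<beta>) * w0\<^sup>2) * ?s ^ (2 * \<beta>)"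
    using False by (simp add: vt_def yt_def power_mult_distrib)
  also have "\<dots> = c * (?c\<^sup>2 + ?s ^ (2 * \<beta>))"
    using amp_sq_\<kappa>_sq[OF False] amp_pow[OF False] False by (simp add: algebra_simps)
  finally show ?thesis using B.cos_gen_sq_add_sin_gen_pow by simp
qed (unfold vt_def yt_def c_def, simp)

lemma yt_has_derivative: "(yt has_real_derivative vt s) (at s)"
proof (cases "w0 = 0")
  case False
  have "((\<lambda>s. \<kappa> * s + phase0) has_real_derivative \<kappa>) (at s)" by (auto intro!: derivative_eq_intros)
  from DERIV_cmult[OF DERIV_chain2[OF B.sin_gen_has_derivative this], of amp] show ?thesis
    using False unfolding yt_def[abs_def] vt_def by (simp add: mult_ac)
qed (unfold yt_def[abs_def] vt_def, auto intro!: derivative_eq_intros)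

lemma vt_has_derivative: "(vt has_real_derivative - (real \<beta> * yt s ^ (2 * \<beta> - 1) * w0\<^sup>2)) (at s)"
proof (cases "w0 = 0")
  case False
  let ?s = "B.S (\<kappa> * s + phase0)"
  have "((\<lambda>s. \<kappa> * s + phase0) has_real_derivative \<kappa>) (at s)" by (auto intro!: derivative_eq_intros)
  from DERIV_cmult[OF DERIV_chain2[OF B.cos_gen_has_derivative this], of "amp * \<kappa>"]
  have D: "(vt has_real_derivative amp * \<kappa> * (- (real \<beta> * ?s ^ (2 * \<beta> - 1)) * \<kappa>)) (at s)"
    using False unfolding vt_def[abs_def] by simp
  have "amp * \<kappa> * (- (real \<beta> * ?s ^ (2 * \<beta> - 1)) * \<kappa>) = - (real \<beta> * ?s ^ (2 * \<beta> - 1) * (amp * \<kappa>\<^sup>2))"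
    by (simp add: power2_eq_square mult_ac)
  also have "\<dots> = - (real \<beta> * yt s ^ (2 * \<beta> - 1) * w0\<^sup>2)"
    using False by (simp add: amp_\<kappa>_sq yt_def power_mult_distrib mult_ac)
  finally show ?thesis using D by (simp only:)
qed (unfold yt_def vt_def[abs_def], auto intro!: derivative_eq_intros)

definition "ys t = yt (Ix t)"
definition "vs t = vt (Ix t)"
definition "zdot t = xs t ^ (2 * \<alpha>) * ys t ^ (2 * \<beta>) * w0"
(* Integrating from -1 rather than 0 makes zs differentiable at 0 in the two-sided sense. *)
definition "zs t = z0 + integral {-1..t} zdot - integral {-1..0} zdot"

lemma ys_has_derivative: "(ys has_real_derivative xs t ^ (2 * \<alpha>) * vs t) (at t)"
  unfolding ys_def[abs_def] vs_def
  using DERIV_chain2[OF yt_has_derivative Ix_has_derivative] by (simp add: mult_ac)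

lemma vs_has_derivative:
  "(vs has_real_derivative - (real \<beta> * xs t ^ (2 * \<alpha>) * ys t ^ (2 * \<beta> - 1) * w0\<^sup>2)) (at t)"
  unfolding vs_def[abs_def] ys_def
  using DERIV_chain2[OF vt_has_derivative Ix_has_derivative] by (simp add: mult_ac)

lemma zs_has_derivative:
  assumes "-1 < t"
  shows "(zs has_real_derivative zdot t) (at t)"
proof -
  have "continuous_on {-1..t + 1} ys"
    using ys_has_derivative by (meson DERIV_isCont continuous_at_imp_continuous_on)
  then have "continuous_on {-1..t + 1} zdot"
    unfolding zdot_def[abs_def] by (intro continuous_intros continuous_on_xs)
  then have "((\<lambda>x. integral {-1..x} zdot) has_real_derivative zdot t) (at t within {-1..t + 1})"
    by (rule integral_has_real_derivative) (use assms in auto)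
  moreover have "at t within {-1..t + 1} = at t" by (rule at_within_Icc_at) (use assms in auto)
  ultimately show ?thesis unfolding zs_def[abs_def] by (auto intro!: derivative_eq_intros)
qed

lemma ham_sol_explicit: "ham_sol \<alpha> \<beta> (x0, y0, z0) (0, v0, w0) xs ys zs us vs (\<lambda>_. w0)"
  unfolding ham_sol_def
proof (intro conjI allI impI)
  fix t :: real assume t: "0 \<le> t"
  show "(xs has_real_derivative us t) (at t within {0..})"
    using xs_has_derivative by (rule has_field_derivative_at_within)
  show "(ys has_real_derivative xs t ^ (2 * \<alpha>) * vs t) (at t within {0..})"
    using ys_has_derivative by (rule has_field_derivative_at_within)
  show "(zs has_real_derivative xs t ^ (2 * \<alpha>) * ys t ^ (2 * \<beta>) * w0) (at t within {0..})"
    using zs_has_derivative[of t] t by (auto simp: zdot_def intro: has_field_derivative_at_within)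
  show "(us has_real_derivative
      - (real \<alpha> * xs t ^ (2 * \<alpha> - 1) * ((vs t)\<^sup>2 + ys t ^ (2 * \<beta>) * w0\<^sup>2))) (at t within {0..})"
    using us_has_derivative[of t] yt_vt_energy[of "Ix t"]
    by (auto simp: vs_def ys_def intro: has_field_derivative_at_within)
  show "(vs has_real_derivative - (real \<beta> * xs t ^ (2 * \<alpha>) * ys t ^ (2 * \<beta> - 1) * w0\<^sup>2))
      (at t within {0..})"
    using vs_has_derivative by (rule has_field_derivative_at_within)
qed (simp_all add: xs_0 us_0 ys_def vs_def Ix_0 yt_0 vt_0 zs_def)

lemma ham_sol_unique_x:
  assumes sol: "ham_sol \<alpha> \<beta> (x0, y0, z0) (0, v0, w0) X Y Z U V W" and "0 \<le> t"
  shows "X t = xs t"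
proof -
  have bound: "\<bar>X s\<bar> \<le> \<bar>x0\<bar>" if "0 \<le> s" for s
  proof -
    have "(U s)\<^sup>2 + c * X s ^ (2 * \<alpha>) = c * x0 ^ (2 * \<alpha>)"
      using ham_sol_xu_energy[OF sol A.n_ge_1 B.n_ge_1 that] by (simp add: c_def)
    then have "c * X s ^ (2 * \<alpha>) \<le> c * x0 ^ (2 * \<alpha>)"
      using zero_le_power2[of "U s"] by linarith
    then have "\<bar>X s\<bar> ^ Suc (2 * \<alpha> - 1) \<le> \<bar>x0\<bar> ^ Suc (2 * \<alpha> - 1)"
      using c_pos A.n_ge_1 by (simp add: power_even_abs)
    then show ?thesis by (rule power_le_imp_le_base) simp
  qed
  have dU: "(U has_real_derivative - (real \<alpha> * c * X s ^ (2 * \<alpha> - 1))) (at s within {0..})"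
    if "0 \<le> s" for s
  proof -
    have "(U has_real_derivative
        - (real \<alpha> * X s ^ (2 * \<alpha> - 1) * ((V s)\<^sup>2 + Y s ^ (2 * \<beta>) * (W s)\<^sup>2))) (at s within {0..})"
      using sol that by (simp add: ham_sol_def)
    then show ?thesis using ham_sol_yv_energy[OF sol B.n_ge_1 that] by (simp add: c_def mult_ac)
  qed
  show ?thesis
  proof (rule power_ode_unique[where a="real \<alpha> * c" and M="\<bar>x0\<bar>" and xb=xs and ub=us])
    show "(xs has_real_derivative us s) (at s within {0..})" if "0 \<le> s" for s
      using xs_has_derivative by (rule has_field_derivative_at_within)
    show "(us has_real_derivative - (real \<alpha> * c * xs s ^ (2 * \<alpha> - 1))) (at s within {0..})"
      if "0 \<le> s" for s
      using us_has_derivative by (simp add: mult_ac has_field_derivative_at_within)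
    show "(X has_real_derivative U s) (at s within {0..})" if "0 \<le> s" for s
      using sol that by (simp add: ham_sol_def)
    show "X 0 = xs 0" "U 0 = us 0" using sol by (simp_all add: ham_sol_def xs_0 us_0)
  qed (use dU bound abs_xs_le c_pos \<open>0 \<le> t\<close> in auto)
qed

lemma traj_x_eq_xs: "0 \<le> t \<Longrightarrow> traj_x \<alpha> \<beta> (x0, y0, z0) (0, v0, w0) t = xs t"
  unfolding traj_x_def using ham_sol_explicit ham_sol_unique_x by (intro the_equality) blast+

lemma integral_traj_x_pow:
  assumes "0 \<le> t"
  shows "integral {0..t} (\<lambda>s. traj_x \<alpha> \<beta> (x0, y0, z0) (0, v0, w0) s ^ (2 * \<alpha>)) = Ix t"
proof -
  have "integral {0..t} (\<lambda>s. traj_x \<alpha> \<beta> (x0, y0, z0) (0, v0, w0) s ^ (2 * \<alpha>))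
      = integral {0..t} (\<lambda>s. xs s ^ (2 * \<alpha>))"
    by (rule integral_cong) (simp add: traj_x_eq_xs)
  also have "\<dots> = Ix t - Ix 0"
    using Ix_has_derivative assms
    by (intro integral_unique fundamental_theorem_of_calculus)
      (auto simp flip: has_real_derivative_iff_has_vector_derivative intro: has_field_derivative_at_within)
  finally show ?thesis by (simp add: Ix_0)
qed

definition "T1 = A.P * \<bar>x0\<bar>"

lemma T1_pos: "0 < T1"
  using A.pi_gen_pos x0_nonzero by (simp add: T1_def)

lemma omega1_eq: "omega1 \<alpha> \<beta> (x0, y0, z0) (0, v0, w0) = \<omega>"
proof -
  have "\<omega> powr (real (2 * \<alpha>)) = \<omega> ^ (2 * \<alpha>)" using \<omega>_pos by (rule powr_realpow)
  also have "\<dots> = c" by (simp add: \<omega>_def c_eq power_divide power_even_abs)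
  finally have "omega1 \<alpha> \<beta> (x0, y0, z0) (0, v0, w0) = (\<omega> powr (real (2 * \<alpha>))) powr (1 / (2 * real \<alpha>))"
    by (simp add: omega1_def c_def)
  also have "\<dots> = \<omega>" using A.n_ge_1 \<omega>_pos by (simp add: powr_powr)
  finally show ?thesis .
qed

lemma tau1_eq: "tau1 \<alpha> \<beta> (x0, y0, z0) (0, v0, w0) = ereal T1"
  using \<omega>_pos by (simp add: tau1_def omega1_eq T1_def \<omega>_def)

lemma Ix_strict_mono: "strict_mono Ix"
proof (rule strict_monoI, rule ccontr)
  fix t1 t2 :: real assume lt: "t1 < t2" and "\<not> Ix t1 < Ix t2"
  have "\<exists>y. (Ix has_real_derivative y) (at x) \<and> 0 \<le> y" for x
    using Ix_has_derivative by (intro exI[of _ "xs x ^ (2 * \<alpha>)"]) (simp add: zero_le_even_power)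
  then have mono: "Ix s1 \<le> Ix s2" if "s1 \<le> s2" for s1 s2
    using DERIV_nonneg_imp_nondecreasing[OF that] by blast
  have const: "Ix s = Ix t1" if "t1 < s" "s < t2" for s
    using mono[of t1 s] mono[of s t2] mono[of t1 t2] that lt \<open>\<not> Ix t1 < Ix t2\<close> by simp
  have zero: "A.S (phase s) = 0" if "t1 < s" "s < t2" for s
  proof -
    have "(Ix has_real_derivative 0) (at s)"
      by (rule has_field_derivative_transform_within_open[where f="\<lambda>_. Ix t1" and S="{t1<..<t2}"])
        (use that const in auto)
    then have "xs s ^ (2 * \<alpha>) = 0" using DERIV_unique Ix_has_derivative by blast
    then show ?thesis using x0_nonzero by (simp add: xs_def)
  qed
  define m where "m = (t1 + t2) / 2"
  have m: "t1 < m" "m < t2" using lt by (auto simp: m_def)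
  have "((\<lambda>_. 0) has_real_derivative 0) (at m)" by simp
  then have "((\<lambda>s. A.S (phase s)) has_real_derivative 0) (at m)"
    by (rule has_field_derivative_transform_within_open[where S="{t1<..<t2}"]) (use m zero in auto)
  then have "A.C (phase m) = 0"
    using DERIV_unique[OF sin_phase_has_derivative] \<omega>_pos by fastforce
  then show False
    using A.cos_gen_sq_add_sin_gen_pow[of "phase m"] zero[OF m] A.n_ge_1 by (simp add: power_0_left)
qed

lemma Ix_T1: "Ix T1 = x0 ^ (2 * \<alpha>) * T1 / (real \<alpha> + 1)"
proof -
  have "phase T1 = 3 * A.P / 2" using x0_nonzero by (simp add: phase_def T1_def \<omega>_def field_simps)
  then have "A.C (phase T1) = 0" using A.cos_gen_3_half_pi by (simp only:)
  then show ?thesis by (simp add: Ix_def)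
qed

lemma tau2_eq:
  assumes "w0 \<noteq> 0"
  shows "tau2 \<alpha> \<beta> (x0, y0, z0) (0, v0, w0)
    = Inf {ereal t | t. 0 < t \<and> omega2 \<alpha> \<beta> (x0, y0, z0) (0, v0, w0) * Ix t = B.P}"
proof -
  have "(0 < t \<and> omega2 \<alpha> \<beta> (x0, y0, z0) (0, v0, w0)
           * integral {0..t} (\<lambda>s. traj_x \<alpha> \<beta> (x0, y0, z0) (0, v0, w0) s ^ (2 * \<alpha>)) = B.P)
      \<longleftrightarrow> (0 < t \<and> omega2 \<alpha> \<beta> (x0, y0, z0) (0, v0, w0) * Ix t = B.P)" for t
    using integral_traj_x_pow[of t] by auto
  then have "{ereal t | t. 0 < t \<and> omega2 \<alpha> \<beta> (x0, y0, z0) (0, v0, w0)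
           * integral {0..t} (\<lambda>s. traj_x \<alpha> \<beta> (x0, y0, z0) (0, v0, w0) s ^ (2 * \<alpha>)) = B.P}
      = {ereal t | t. 0 < t \<and> omega2 \<alpha> \<beta> (x0, y0, z0) (0, v0, w0) * Ix t = B.P}"
    by blast
  then show ?thesis using assms by (simp add: tau2_def)
qed

lemma tau_order:
  defines "K \<equiv> omega2 \<alpha> \<beta> (x0, y0, z0) (0, v0, w0) * Ix T1"
  shows "(tau1 \<alpha> \<beta> (x0, y0, z0) (0, v0, w0) \<le> tau2 \<alpha> \<beta> (x0, y0, z0) (0, v0, w0)
            \<longleftrightarrow> w0 = 0 \<or> K \<le> B.P)
       \<and> (tau2 \<alpha> \<beta> (x0, y0, z0) (0, v0, w0) \<le> tau1 \<alpha> \<beta> (x0, y0, z0) (0, v0, w0)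
            \<longleftrightarrow> w0 \<noteq> 0 \<and> B.P \<le> K)"
proof (cases "w0 = 0")
  case False
  have "0 < omega2 \<alpha> \<beta> (x0, y0, z0) (0, v0, w0)"
    using False c_pos by (simp add: omega2_def c_def[symmetric])
  then have "strict_mono (\<lambda>t. omega2 \<alpha> \<beta> (x0, y0, z0) (0, v0, w0) * Ix t)"
    using Ix_strict_mono by (simp add: strict_mono_def)
  from Inf_level_set_compare[OF this _ _ less_imp_le[OF T1_pos], of "B.P"]
  show ?thesis
    using False B.pi_gen_pos continuous_on_Ix
    by (simp add: tau1_eq tau2_eq Ix_0 K_def continuous_on_mult_left)
qed (use tau1_eq in \<open>simp add: tau2_def\<close>)

lemma omega2_eq:
  "omega2 \<alpha> \<beta> (x0, y0, z0) (0, v0, w0) = \<bar>w0\<bar> powr (1 / real \<beta>) * \<bar>x0\<bar> powr (real \<alpha> / real \<beta> - real \<alpha>)"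
proof -
  have a: "0 < \<bar>x0\<bar>" using x0_nonzero by simp
  have "c = \<bar>x0\<bar> powr (- real (2 * \<alpha>))"
    using powr_realpow[OF a, of "2 * \<alpha>"] by (simp add: c_eq power_even_abs powr_minus_divide)
  then have "c powr ((real \<beta> - 1) / (2 * real \<beta>))
      = \<bar>x0\<bar> powr (- real (2 * \<alpha>) * ((real \<beta> - 1) / (2 * real \<beta>)))"
    by (simp add: powr_powr)
  also have "- real (2 * \<alpha>) * ((real \<beta> - 1) / (2 * real \<beta>)) = real \<alpha> / real \<beta> - real \<alpha>"
    using B.n_ge_1 by (simp add: field_simps)
  finally show ?thesis by (simp add: omega2_def c_def[symmetric])
qed

lemma omega2_Ix_T1:
  "omega2 \<alpha> \<beta> (x0, y0, z0) (0, v0, w0) * Ix T1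
    = (\<bar>w0\<bar> * \<bar>y0\<bar> ^ \<beta> * \<bar>x0\<bar> ^ \<alpha>) powr (1 / real \<beta>)
      * (A.P * \<bar>x0\<bar> ^ (\<alpha> + 1) / ((real \<alpha> + 1) * \<bar>y0\<bar>))"
proof -
  define a where "a = \<bar>x0\<bar>"
  have a: "0 < a" using x0_nonzero by (simp add: a_def)
  have pow: "a ^ k = a powr real k" for k using powr_realpow[OF a] by simp
  have x2: "x0 ^ (2 * \<alpha>) = a powr (real (2 * \<alpha>))"
    using pow[of "2 * \<alpha>"] by (simp add: a_def power_even_abs)
  have "Ix T1 = a powr (real (2 * \<alpha>)) * (A.P * a) / (real \<alpha> + 1)"
    by (simp only: Ix_T1 x2, simp add: T1_def a_def)
  also have "\<dots> = a powr (real (2 * \<alpha>) + 1) * A.P / (real \<alpha> + 1)"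
    using a by (simp add: powr_add mult_ac)
  finally have Ix_T1': "Ix T1 = a powr (real (2 * \<alpha>) + 1) * A.P / (real \<alpha> + 1)" .
  have "omega2 \<alpha> \<beta> (x0, y0, z0) (0, v0, w0) * Ix T1
      = \<bar>w0\<bar> powr (1 / real \<beta>) * (a powr (real \<alpha> / real \<beta> - real \<alpha>) * a powr (real (2 * \<alpha>) + 1))
        * A.P / (real \<alpha> + 1)"
    by (simp add: omega2_eq Ix_T1' a_def[symmetric] mult_ac)
  also have "\<dots> = \<bar>w0\<bar> powr (1 / real \<beta>) * (a powr (real \<alpha> / real \<beta>) * a powr (real \<alpha> + 1))
        * A.P / (real \<alpha> + 1)"
    by (simp flip: powr_add add: algebra_simps)
  also have "\<dots> = (\<bar>w0\<bar> powr (1 / real \<beta>) * \<bar>y0\<bar> * a powr (real \<alpha> / real \<beta>))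
        * (A.P * a powr (real \<alpha> + 1) / ((real \<alpha> + 1) * \<bar>y0\<bar>))"
  proof -
    have "W * (E1 * E2) * Q / d = (W * Y * E1) * (Q * E2 / (d * Y))" if "Y \<noteq> 0" "d \<noteq> 0"
      for W Y E1 E2 Q d :: real
      using that by (simp add: field_simps)
    then show ?thesis using y0_nonzero by simp
  qed
  also have "\<bar>w0\<bar> powr (1 / real \<beta>) * \<bar>y0\<bar> * a powr (real \<alpha> / real \<beta>)
      = (\<bar>w0\<bar> * \<bar>y0\<bar> ^ \<beta> * a ^ \<alpha>) powr (1 / real \<beta>)"
    using a y0_nonzero B.n_ge_1 by (simp add: powr_mult powr_powr flip: powr_realpow)
  also have "a powr (real \<alpha> + 1) = a ^ (\<alpha> + 1)" using pow[of "\<alpha> + 1"] by (simp add: add.commute)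
  finally show ?thesis by (simp only: a_def)
qed

lemma vertical_weight_le_1: "\<bar>w0\<bar> * \<bar>y0\<bar> ^ \<beta> * \<bar>x0\<bar> ^ \<alpha> \<le> 1"
proof -
  have "(\<bar>w0\<bar> * \<bar>y0\<bar> ^ \<beta> * \<bar>x0\<bar> ^ \<alpha>)\<^sup>2 = x0 ^ (2 * \<alpha>) * (y0 ^ (2 * \<beta>) * w0\<^sup>2)"
    by (simp add: power_mult_distrib power_even_abs power_mult[symmetric] mult_ac)
  also have "\<dots> \<le> x0 ^ (2 * \<alpha>) * (v0\<^sup>2 + y0 ^ (2 * \<beta>) * w0\<^sup>2)"
    using x0_pow_pos by (intro mult_left_mono) auto
  finally show ?thesis using unit_level by (simp add: power_le_one_iff abs_square_le_1)
qed

end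

section \<open>Comparison of the conjugate-time candidates on the circle u0 = 0\<close>

definition critical_ratio :: "nat \<Rightarrow> real \<Rightarrow> real \<Rightarrow> real" where
  "critical_ratio \<alpha> x0 y0 = pi_gen (real \<alpha>) * \<bar>x0\<bar> ^ (\<alpha> + 1) / ((real \<alpha> + 1) * \<bar>y0\<bar>)"

lemma critical_ratio_pos: "1 \<le> \<alpha> \<Longrightarrow> x0 \<noteq> 0 \<Longrightarrow> y0 \<noteq> 0 \<Longrightarrow> 0 < critical_ratio \<alpha> x0 y0"
  using gen_trig.pi_gen_pos[of \<alpha>] by (simp add: critical_ratio_def gen_trig_def)

lemma critical_ratio_le_iff:
  assumes "1 \<le> \<alpha>" "1 \<le> \<beta>" "y0 \<noteq> 0"
  shows "critical_ratio \<alpha> x0 y0 \<le> pi_gen (real \<beta>)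
    \<longleftrightarrow> pi_gen (real \<alpha>) * \<bar>x0\<bar> ^ (\<alpha> + 1) / (pi_gen (real \<beta>) * (real \<alpha> + 1)) \<le> \<bar>y0\<bar>"
  using gen_trig.pi_gen_pos[of \<beta>] assms
  by (simp add: critical_ratio_def gen_trig_def divide_le_eq pos_divide_le_eq mult_ac)

lemma tau_order_vertical:
  assumes "1 \<le> \<alpha>" "1 \<le> \<beta>" "x0 \<noteq> 0" "y0 \<noteq> 0" "Ham \<alpha> \<beta> (x0, y0, z0) (0, v0, w0) = 1/2"
  defines "\<rho> \<equiv> \<bar>w0\<bar> * \<bar>y0\<bar> ^ \<beta> * \<bar>x0\<bar> ^ \<alpha>"
  shows "(tau1 \<alpha> \<beta> (x0, y0, z0) (0, v0, w0) \<le> tau2 \<alpha> \<beta> (x0, y0, z0) (0, v0, w0) \<longleftrightarrow>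
            w0 = 0 \<or> \<rho> powr (1 / real \<beta>) * critical_ratio \<alpha> x0 y0 \<le> pi_gen (real \<beta>))
       \<and> (tau2 \<alpha> \<beta> (x0, y0, z0) (0, v0, w0) \<le> tau1 \<alpha> \<beta> (x0, y0, z0) (0, v0, w0) \<longleftrightarrow>
            w0 \<noteq> 0 \<and> pi_gen (real \<beta>) \<le> \<rho> powr (1 / real \<beta>) * critical_ratio \<alpha> x0 y0)
       \<and> \<rho> \<le> 1"
proof -
  interpret vertical_covector \<alpha> \<beta> x0 y0 z0 v0 w0
    using assms by unfold_locales (auto simp: Ham_def algebra_simps)
  show ?thesis
    using tau_order vertical_weight_le_1 omega2_Ix_T1 by (simp add: \<rho>_def critical_ratio_def)
qed

lemma abs_rho: "1 \<le> k \<Longrightarrow> \<bar>rho (real k) s\<bar> = \<bar>s\<bar> ^ k"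
proof (cases "s = 0")
  case False
  assume k: "1 \<le> k"
  have "\<bar>s\<bar> powr (real k - 1) = \<bar>s\<bar> ^ (k - 1)"
    using powr_realpow[of "\<bar>s\<bar>" "k - 1"] False k by (simp add: of_nat_diff)
  then have "\<bar>rho (real k) s\<bar> = \<bar>s\<bar> ^ (k - 1) * \<bar>s\<bar>" by (simp add: rho_def abs_mult)
  also have "\<dots> = \<bar>s\<bar> ^ k" using k by (simp flip: power_Suc2)
  finally show ?thesis .
qed (simp add: rho_def)

lemma rho_sq: "1 \<le> k \<Longrightarrow> (rho (real k) s)\<^sup>2 = s ^ (2 * k)"
proof -
  assume k: "1 \<le> k"
  have "(rho (real k) s)\<^sup>2 = (\<bar>s\<bar> ^ k)\<^sup>2" by (simp flip: abs_rho[OF k])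
  also have "\<dots> = s ^ (2 * k)" by (simp add: power_mult[symmetric] power_even_abs mult.commute)
  finally show ?thesis .
qed

lemma rho_eq_0_iff: "1 \<le> k \<Longrightarrow> rho (real k) s = 0 \<longleftrightarrow> s = 0"
  using abs_rho[of k s] by (auto simp: power_0_left)

lemma sph_half_pi:
  fixes \<alpha> \<beta> :: nat and x0 y0 z0 \<phi> :: real
  assumes \<alpha>: "1 \<le> \<alpha>" and \<beta>: "1 \<le> \<beta>" and x0: "x0 \<noteq> 0" and y0: "y0 \<noteq> 0"
  obtains v w where "sph \<alpha> \<beta> (x0, y0, z0) (pi_gen (real \<alpha>) / 2) \<phi> = (0, v, w)"
    "Ham \<alpha> \<beta> (x0, y0, z0) (0, v, w) = 1/2"
    "(\<bar>w\<bar> * \<bar>y0\<bar> ^ \<beta> * \<bar>x0\<bar> ^ \<alpha>) powr (1 / real \<beta>) = \<bar>sin_gen (real \<beta>) \<phi>\<bar>"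
    "w = 0 \<longleftrightarrow> sin_gen (real \<beta>) \<phi> = 0"
proof -
  interpret A: gen_trig \<alpha> using \<alpha> by unfold_locales
  interpret B: gen_trig \<beta> using \<beta> by unfold_locales
  define r where "r = rho (real \<alpha>) (1 / x0)"
  define v where "v = B.C \<phi> * r"
  define w where "w = r * rho (real \<beta>) (B.S \<phi> / y0)"
  have "sph \<alpha> \<beta> (x0, y0, z0) (A.P / 2) \<phi> = (0, v, w)"
    by (simp add: sph_def A.sin_gen_half_pi A.cos_gen_half_pi v_def w_def r_def)
  moreover have "Ham \<alpha> \<beta> (x0, y0, z0) (0, v, w) = 1/2"
  proof -
    have r: "x0 ^ (2 * \<alpha>) * r\<^sup>2 = 1" using x0 by (simp add: r_def rho_sq[OF \<alpha>] power_divide)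
    have s: "y0 ^ (2 * \<beta>) * (rho (real \<beta>) (B.S \<phi> / y0))\<^sup>2 = B.S \<phi> ^ (2 * \<beta>)"
      using y0 by (simp add: rho_sq[OF \<beta>] power_divide)
    have "Ham \<alpha> \<beta> (x0, y0, z0) (0, v, w) = ((B.C \<phi>)\<^sup>2 * (x0 ^ (2 * \<alpha>) * r\<^sup>2) +
        (x0 ^ (2 * \<alpha>) * r\<^sup>2) * (y0 ^ (2 * \<beta>) * (rho (real \<beta>) (B.S \<phi> / y0))\<^sup>2)) / 2"
      by (simp add: Ham_def v_def w_def power_mult_distrib mult_ac)
    also have "\<dots> = 1/2" using B.cos_gen_sq_add_sin_gen_pow[of \<phi>] by (simp only: r s) simp
    finally show ?thesis .
  qed
  moreover have "\<bar>w\<bar> * \<bar>y0\<bar> ^ \<beta> * \<bar>x0\<bar> ^ \<alpha> = \<bar>B.S \<phi>\<bar> ^ \<beta>"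
    using x0 y0
    by (simp add: w_def r_def abs_mult abs_rho[OF \<alpha>] abs_rho[OF \<beta>] power_divide)
  then have "(\<bar>w\<bar> * \<bar>y0\<bar> ^ \<beta> * \<bar>x0\<bar> ^ \<alpha>) powr (1 / real \<beta>) = \<bar>B.S \<phi>\<bar>"
    using \<beta> by (cases "B.S \<phi> = 0") (simp_all add: powr_powr flip: powr_realpow)
  moreover have "w = 0 \<longleftrightarrow> B.S \<phi> = 0"
    using x0 y0 by (simp add: w_def r_def rho_eq_0_iff[OF \<alpha>] rho_eq_0_iff[OF \<beta>])
  ultimately show ?thesis using that by blast
qed

lemma weighted_critical_ratio_le:
  assumes "1 \<le> \<alpha>" "1 \<le> \<beta>" "x0 \<noteq> 0" "y0 \<noteq> 0" "0 \<le> \<rho>" "\<rho> \<le> 1"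
  shows "\<rho> powr (1 / real \<beta>) * critical_ratio \<alpha> x0 y0 \<le> critical_ratio \<alpha> x0 y0"
  using assms critical_ratio_pos[of \<alpha> x0 y0] by (intro mult_left_le_one_le powr_le1) auto

lemma all_tau1_le_tau2_iff:
  assumes "1 \<le> \<alpha>" "1 \<le> \<beta>" "x0 \<noteq> 0" "y0 \<noteq> 0"
  shows "(\<forall>u0 v0 w0. Ham \<alpha> \<beta> (x0, y0, z0) (u0, v0, w0) = 1/2 \<and> u0 = 0 \<longrightarrow>
             tau1 \<alpha> \<beta> (x0, y0, z0) (u0, v0, w0) \<le> tau2 \<alpha> \<beta> (x0, y0, z0) (u0, v0, w0))
         \<longleftrightarrow> critical_ratio \<alpha> x0 y0 \<le> pi_gen (real \<beta>)"
proof
  assume all: "\<forall>u0 v0 w0. Ham \<alpha> \<beta> (x0, y0, z0) (u0, v0, w0) = 1/2 \<and> u0 = 0 \<longrightarrow>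
             tau1 \<alpha> \<beta> (x0, y0, z0) (u0, v0, w0) \<le> tau2 \<alpha> \<beta> (x0, y0, z0) (u0, v0, w0)"
  define w where "w = 1 / (\<bar>y0\<bar> ^ \<beta> * \<bar>x0\<bar> ^ \<alpha>)"
  have weight: "\<bar>w\<bar> * \<bar>y0\<bar> ^ \<beta> * \<bar>x0\<bar> ^ \<alpha> = 1"
    using assms by (simp add: w_def)
  have "x0 ^ (2 * \<alpha>) * y0 ^ (2 * \<beta>) * w\<^sup>2 = (\<bar>w\<bar> * \<bar>y0\<bar> ^ \<beta> * \<bar>x0\<bar> ^ \<alpha>)\<^sup>2"
    by (simp add: power_mult_distrib power_even_abs power_mult[symmetric] mult_ac)
  then have Ham: "Ham \<alpha> \<beta> (x0, y0, z0) (0, 0, w) = 1/2"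
    by (simp add: Ham_def weight)
  moreover have "w \<noteq> 0" using weight by auto
  ultimately show "critical_ratio \<alpha> x0 y0 \<le> pi_gen (real \<beta>)"
    using all tau_order_vertical[OF assms Ham] by (simp add: weight)
next
  assume K: "critical_ratio \<alpha> x0 y0 \<le> pi_gen (real \<beta>)"
  show "\<forall>u0 v0 w0. Ham \<alpha> \<beta> (x0, y0, z0) (u0, v0, w0) = 1/2 \<and> u0 = 0 \<longrightarrow>
             tau1 \<alpha> \<beta> (x0, y0, z0) (u0, v0, w0) \<le> tau2 \<alpha> \<beta> (x0, y0, z0) (u0, v0, w0)"
  proof (intro allI impI, elim conjE)
    fix u0 v0 w0 assume "Ham \<alpha> \<beta> (x0, y0, z0) (u0, v0, w0) = 1/2" "u0 = 0"
    then have Ham: "Ham \<alpha> \<beta> (x0, y0, z0) (0, v0, w0) = 1/2" by simp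
    note order = tau_order_vertical[OF assms Ham]
    then show "tau1 \<alpha> \<beta> (x0, y0, z0) (u0, v0, w0) \<le> tau2 \<alpha> \<beta> (x0, y0, z0) (u0, v0, w0)"
      using weighted_critical_ratio_le[OF assms, of "\<bar>w0\<bar> * \<bar>y0\<bar> ^ \<beta> * \<bar>x0\<bar> ^ \<alpha>"] K \<open>u0 = 0\<close>
      by auto
  qed
qed

lemma tau_order_arcs:
  assumes "1 \<le> \<alpha>" "1 \<le> \<beta>" "x0 \<noteq> 0" "y0 \<noteq> 0"
    and "pi_gen (real \<beta>) \<le> critical_ratio \<alpha> x0 y0"
  shows "\<exists>\<delta>. 0 < \<delta> \<and> \<delta> \<le> pi_gen (real \<beta>) / 2 \<and>
           (\<forall>\<phi>2. 0 \<le> \<phi>2 \<and> \<phi>2 < 2 * pi_gen (real \<beta>) \<longrightarrow>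
              (let l = sph \<alpha> \<beta> (x0, y0, z0) (pi_gen (real \<alpha>) / 2) \<phi>2;
                   P = pi_gen (real \<beta>) in
               ((\<phi>2 \<le> \<delta> \<or> \<bar>\<phi>2 - P\<bar> \<le> \<delta> \<or> 2 * P - \<phi>2 \<le> \<delta>) \<longrightarrow>
                  tau1 \<alpha> \<beta> (x0, y0, z0) l \<le> tau2 \<alpha> \<beta> (x0, y0, z0) l) \<and>
               ((\<delta> \<le> \<phi>2 \<and> \<phi>2 \<le> P - \<delta> \<or> P + \<delta> \<le> \<phi>2 \<and> \<phi>2 \<le> 2 * P - \<delta>) \<longrightarrow>
                  tau2 \<alpha> \<beta> (x0, y0, z0) l \<le> tau1 \<alpha> \<beta> (x0, y0, z0) l)))"
proof -
  interpret B: gen_trig \<beta> using assms by unfold_locales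
  define K where "K = critical_ratio \<alpha> x0 y0"
  have K: "0 < K" using critical_ratio_pos assms by (simp add: K_def)
  obtain \<delta> where \<delta>: "0 \<le> \<delta>" "\<delta> \<le> B.P / 2" "B.S \<delta> * K = B.P"
    using B.sin_gen_surj_quarter[of "B.P / K"] assms(5) K B.pi_gen_pos by (auto simp: K_def)
  have "\<delta> \<noteq> 0" using \<delta> B.sin_gen_0 B.pi_gen_pos by auto
  show ?thesis
  proof (intro exI[of _ \<delta>] conjI allI impI)
    fix \<phi>2 assume \<phi>2: "0 \<le> \<phi>2 \<and> \<phi>2 < 2 * B.P"
    obtain v w where sph: "sph \<alpha> \<beta> (x0, y0, z0) (pi_gen (real \<alpha>) / 2) \<phi>2 = (0, v, w)"
      and Ham: "Ham \<alpha> \<beta> (x0, y0, z0) (0, v, w) = 1/2"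
      and weight: "(\<bar>w\<bar> * \<bar>y0\<bar> ^ \<beta> * \<bar>x0\<bar> ^ \<alpha>) powr (1 / real \<beta>) = \<bar>B.S \<phi>2\<bar>"
      and w0: "w = 0 \<longleftrightarrow> B.S \<phi>2 = 0"
      using sph_half_pi assms(1-4) by blast
    note order = tau_order_vertical[OF assms(1-4) Ham, unfolded weight, folded K_def]
    have "tau1 \<alpha> \<beta> (x0, y0, z0) (0, v, w) \<le> tau2 \<alpha> \<beta> (x0, y0, z0) (0, v, w)"
      if "\<phi>2 \<le> \<delta> \<or> \<bar>\<phi>2 - B.P\<bar> \<le> \<delta> \<or> 2 * B.P - \<phi>2 \<le> \<delta>"
      using B.abs_sin_gen_le_near_zeros[of \<delta> \<phi>2] \<delta> \<phi>2 that K order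
      by (auto intro: order.trans[OF mult_right_mono])
    moreover have "tau2 \<alpha> \<beta> (x0, y0, z0) (0, v, w) \<le> tau1 \<alpha> \<beta> (x0, y0, z0) (0, v, w)"
      if "\<delta> \<le> \<phi>2 \<and> \<phi>2 \<le> B.P - \<delta> \<or> B.P + \<delta> \<le> \<phi>2 \<and> \<phi>2 \<le> 2 * B.P - \<delta>"
    proof -
      have le: "B.S \<delta> \<le> \<bar>B.S \<phi>2\<bar>" using B.sin_gen_le_abs_away_from_zeros \<delta> that by blast
      then have "B.P \<le> \<bar>B.S \<phi>2\<bar> * K" using mult_right_mono[OF le, of K] K \<delta>(3) by simp
      moreover have "0 < B.S \<delta>" using \<delta>(3) K B.pi_gen_pos by (metis zero_less_mult_pos2)
      then have "w \<noteq> 0" using le w0 by auto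
      ultimately show ?thesis using order by simp
    qed
    ultimately show "let l = sph \<alpha> \<beta> (x0, y0, z0) (pi_gen (real \<alpha>) / 2) \<phi>2; P = pi_gen (real \<beta>) in
               ((\<phi>2 \<le> \<delta> \<or> \<bar>\<phi>2 - P\<bar> \<le> \<delta> \<or> 2 * P - \<phi>2 \<le> \<delta>) \<longrightarrow>
                  tau1 \<alpha> \<beta> (x0, y0, z0) l \<le> tau2 \<alpha> \<beta> (x0, y0, z0) l) \<and>
               ((\<delta> \<le> \<phi>2 \<and> \<phi>2 \<le> P - \<delta> \<or> P + \<delta> \<le> \<phi>2 \<and> \<phi>2 \<le> 2 * P - \<delta>) \<longrightarrow>
                  tau2 \<alpha> \<beta> (x0, y0, z0) l \<le> tau1 \<alpha> \<beta> (x0, y0, z0) l)"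
      unfolding Let_def sph by blast
  qed (use \<delta> \<open>\<delta> \<noteq> 0\<close> in auto)
qed

lemma critical_ratio_ge_if_tau2_le_tau1:
  assumes "1 \<le> \<alpha>" "1 \<le> \<beta>" "x0 \<noteq> 0" "y0 \<noteq> 0" "Ham \<alpha> \<beta> (x0, y0, z0) (0, v0, w0) = 1/2"
    and "tau2 \<alpha> \<beta> (x0, y0, z0) (0, v0, w0) \<le> tau1 \<alpha> \<beta> (x0, y0, z0) (0, v0, w0)"
  shows "pi_gen (real \<beta>) \<le> critical_ratio \<alpha> x0 y0"
  using tau_order_vertical[OF assms(1-5)] assms(6)
    weighted_critical_ratio_le[OF assms(1-4), of "\<bar>w0\<bar> * \<bar>y0\<bar> ^ \<beta> * \<bar>x0\<bar> ^ \<alpha>"]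
  by auto

theorem mainTheorem12:
  fixes \<alpha> \<beta> :: nat and x0 y0 z0 :: real
  assumes "\<alpha> \<ge> 1" and "\<beta> \<ge> 1" and "x0 \<noteq> 0" and "y0 \<noteq> 0"
  shows "((\<forall>u0 v0 w0. Ham \<alpha> \<beta> (x0, y0, z0) (u0, v0, w0) = 1/2 \<and> u0 = 0 \<longrightarrow>
             tau1 \<alpha> \<beta> (x0, y0, z0) (u0, v0, w0) \<le> tau2 \<alpha> \<beta> (x0, y0, z0) (u0, v0, w0))
         \<longleftrightarrow> \<bar>y0\<bar> \<ge> pi_gen (real \<alpha>) * \<bar>x0\<bar> ^ (\<alpha> + 1) / (pi_gen (real \<beta>) * (real \<alpha> + 1)))
      \<and> ({(u0, v0, w0). Ham \<alpha> \<beta> (x0, y0, z0) (u0, v0, w0) = 1/2 \<and> u0 = 0 \<and>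
             tau2 \<alpha> \<beta> (x0, y0, z0) (u0, v0, w0) \<le> tau1 \<alpha> \<beta> (x0, y0, z0) (u0, v0, w0)} \<noteq> {}
         \<longrightarrow> (\<exists>\<delta>. 0 < \<delta> \<and> \<delta> \<le> pi_gen (real \<beta>) / 2 \<and>
               (\<forall>\<phi>2. 0 \<le> \<phi>2 \<and> \<phi>2 < 2 * pi_gen (real \<beta>) \<longrightarrow>
                  (let l = sph \<alpha> \<beta> (x0, y0, z0) (pi_gen (real \<alpha>) / 2) \<phi>2;
                       P = pi_gen (real \<beta>) in
                   ((\<phi>2 \<le> \<delta> \<or> \<bar>\<phi>2 - P\<bar> \<le> \<delta> \<or> 2 * P - \<phi>2 \<le> \<delta>) \<longrightarrow>
                      tau1 \<alpha> \<beta> (x0, y0, z0) l \<le> tau2 \<alpha> \<beta> (x0, y0, z0) l) \<and>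
                   ((\<delta> \<le> \<phi>2 \<and> \<phi>2 \<le> P - \<delta> \<or> P + \<delta> \<le> \<phi>2 \<and> \<phi>2 \<le> 2 * P - \<delta>) \<longrightarrow>
                      tau2 \<alpha> \<beta> (x0, y0, z0) l \<le> tau1 \<alpha> \<beta> (x0, y0, z0) l)))))"
proof -
  have "pi_gen (real \<beta>) \<le> critical_ratio \<alpha> x0 y0"
    if "{(u0, v0, w0). Ham \<alpha> \<beta> (x0, y0, z0) (u0, v0, w0) = 1/2 \<and> u0 = 0 \<and>
          tau2 \<alpha> \<beta> (x0, y0, z0) (u0, v0, w0) \<le> tau1 \<alpha> \<beta> (x0, y0, z0) (u0, v0, w0)} \<noteq> {}"
    using that critical_ratio_ge_if_tau2_le_tau1[OF assms] by auto
  then show ?thesis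
    using all_tau1_le_tau2_iff[OF assms] critical_ratio_le_iff[OF assms(1,2,4)]
      tau_order_arcs[OF assms]
    by blast
qed

end
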